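(* Let $\nu>0$, $\sigma\neq 0$, $l\neq 0$ and $c\in\mathbb{R}$. Let $\Theta:\mathbb{R}\to\mathbb{R}$ be a (deterministic) $C^2$ function and let $h:\mathbb{R}\times[0,\infty)\to\mathbb{R}$ be a deterministic function which is $C^2$ in its first argument $b$ and $C^1$ in its second argument $t$, and which vanishes nowhere. Let $(\beta_t)_{t\ge0}$ be a standard one-dimensional Brownian motion and define the random field $$\Upsilon(x,t)=\Theta(lx-ct)\,h(\beta_t,t).$$ Suppose that $\Upsilon$ solves the stochastic Burgers equation with linear multiplicative noise in the Itô sense, i.e. for every $x\in\mathbb{R}$, almost surely, for all $t\ge0$, $$\Upsilon(x,t)=\Upsilon(x,0)+\int_0^t\big[\nu\Upsilon_{xx}(x,s)-\Upsilon(x,s)\Upsilon_x(x,s)\big]\,ds+\sigma\int_0^t\Upsilon(x,s)\,d\beta_s .$$ Then $\Theta$ is constant. In particular, the Ansatz $\Upsilon(x,t)=\Theta(lx-ct)e^{\sigma\beta_t-\frac{\sigma^2}{2}t}$ with deterministic $\Theta$ yields only spatially homogeneous solutions, and no nonconstant solution of the deterministic travelling wave equation $\nu\Theta''+c\Theta'-\Theta\Theta'=0$ multiplied by $e^{\sigma\beta_t-\frac{\sigma^2}{2}t}$ solves this stochastic Burgers equation.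
   Context: The integral $\int_0^t\cdot\,d\beta_s$ is the Itô stochastic integral. Subscripts $x$ denote partial derivatives in $x$. *)

theory Defs
  imports "HOL-Probability.Probability"
begin

definition std_brownian_motion :: "'a measure \<Rightarrow> (real \<Rightarrow> 'a \<Rightarrow> real) \<Rightarrow> bool" where
  "std_brownian_motion M B \<longleftrightarrow>
     prob_space M \<and>
     (\<forall>t\<ge>0. B t \<in> borel_measurable M) \<and>
     (AE \<omega> in M. B 0 \<omega> = 0 \<and> continuous_on {0..} (\<lambda>t. B t \<omega>)) \<and>
     (\<forall>s t. 0 \<le> s \<longrightarrow> s < t \<longrightarrow>
        distributed M lborel (\<lambda>\<omega>. B t \<omega> - B s \<omega>)
          (\<lambda>x. ennreal (normal_density 0 (sqrt (t - s)) x))) \<and>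
     (\<forall>(ts :: nat \<Rightarrow> real) n. 0 \<le> ts 0 \<and> (\<forall>i<n. ts i < ts (Suc i)) \<longrightarrow>
        prob_space.indep_vars M (\<lambda>_. borel) (\<lambda>i \<omega>. B (ts (Suc i)) \<omega> - B (ts i) \<omega>) {..<n})"

definition ito_sum :: "(real \<Rightarrow> 'a \<Rightarrow> real) \<Rightarrow> (real \<Rightarrow> 'a \<Rightarrow> real) \<Rightarrow> real \<Rightarrow> nat \<Rightarrow> 'a \<Rightarrow> real" where
  "ito_sum Y B t n \<omega> =
     (\<Sum>k<n. Y (real k * t / real n) \<omega> *
        (B (real (Suc k) * t / real n) \<omega> - B (real k * t / real n) \<omega>))"

definition is_ito_integral :: "'a measure \<Rightarrow> (real \<Rightarrow> 'a \<Rightarrow> real) \<Rightarrow> (real \<Rightarrow> 'a \<Rightarrow> real)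
     \<Rightarrow> (real \<Rightarrow> 'a \<Rightarrow> real) \<Rightarrow> bool" where
  "is_ito_integral M B Y J \<longleftrightarrow>
     (\<forall>t\<ge>0. J t \<in> borel_measurable M \<and>
        (\<forall>\<epsilon>>0. (\<lambda>n. measure M {\<omega> \<in> space M. \<bar>ito_sum Y B t n \<omega> - J t \<omega>\<bar> > \<epsilon>})
                  \<longlonglongrightarrow> 0))"

end

(* Write Upsilon(x, t) = G(beta_t, t) with G(b, s) = Theta(l x - c s) h(b, s).  Over a short step
   [t0, t0 + tau] the equation gives the increment of G(beta, .) as the time integral of the drift
   plus sigma times the increment of the Ito integral, and the latter is
   sigma G(beta_t0, t0) (beta_t1 - beta_t0) up to a stopped martingale transform that is small in
   L^2.  A first-order expansion of G gives G_b(beta_t0, t0) (beta_t1 - beta_t0) instead.  Since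
   beta_t1 - beta_t0 is of exact order sqrt tau while all other terms are o(sqrt tau) in probability,
   G_b = sigma G along the path, and everywhere because beta_t0 has full support.  Unless Theta
   vanishes identically this forces h(b, t) = exp(sigma b) h(0, t).  The drift at time t0 divided by
   exp(sigma beta_t0) can then be approximated in probability by a function of the Brownian increments
   after t0, which are independent of beta_t0, so it cannot depend on beta_t0.  But the Burgers
   nonlinearity contributes Theta Theta' l h(0, t0)^2 exp(2 sigma beta_t0) to the drift, hence
   Theta Theta' = 0 and Theta is constant. *)

theory Submission
  imports Defs
begin

section \<open>Real analysis\<close>

lemma abs_le_if_abs_le_on_rationals:
  fixes f :: "real \<Rightarrow> real"
  assumes cont: "continuous_on {a..b} f" and "a < b"
    and bound: "\<And>r. r \<in> \<rat> \<Longrightarrow> a \<le> r \<Longrightarrow> r \<le> b \<Longrightarrow> \<bar>f r\<bar> \<le> K"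
    and s: "s \<in> {a..b}"
  shows "\<bar>f s\<bar> \<le> K"
proof (rule ccontr)
  assume "\<not> \<bar>f s\<bar> \<le> K"
  then obtain d where d: "0 < d" "\<And>y. y \<in> {a..b} \<Longrightarrow> dist y s < d \<Longrightarrow> dist (f y) (f s) < \<bar>f s\<bar> - K"
    using cont s unfolding continuous_on_iff by (metis diff_gt_0_iff_gt not_le)
  have "max a (s - d) < min b (s + d)" using \<open>a < b\<close> s d(1) by auto
  then obtain r where r: "r \<in> \<rat>" "max a (s - d) < r" "r < min b (s + d)"
    using Rats_dense_in_real by blast
  then have "dist (f r) (f s) < \<bar>f s\<bar> - K" by (intro d(2)) (auto simp: dist_real_def)
  moreover have "\<bar>f r\<bar> \<le> K" using r by (intro bound) auto
  ultimately show False by (simp add: dist_real_def)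
qed

lemma continuous_on_strip_bounded:
  fixes F :: "real \<Rightarrow> real \<Rightarrow> real"
  assumes "continuous_on (UNIV \<times> {a..b}) (\<lambda>(x, s). F x s)"
  obtains C where "0 < C" "\<And>x s. \<bar>x\<bar> \<le> K \<Longrightarrow> s \<in> {a..b} \<Longrightarrow> \<bar>F x s\<bar> \<le> C"
proof -
  have "cbox (-K, a) (K, b) \<subseteq> UNIV \<times> {a..b}" by (auto simp: cbox_Pair_eq)
  then have "compact ((\<lambda>(x, s). F x s) ` cbox (-K, a) (K, b))"
    by (intro compact_continuous_image[OF continuous_on_subset[OF assms]] compact_cbox)
  then obtain C where C: "\<forall>y \<in> (\<lambda>(x, s). F x s) ` cbox (-K, a) (K, b). norm y \<le> C"
    using compact_imp_bounded bounded_iff by metis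
  show ?thesis
  proof (rule that[of "max C 1"])
    fix x s assume "\<bar>x\<bar> \<le> K" "s \<in> {a..b}"
    then have "(x, s) \<in> cbox (-K, a) (K, b)" by (auto simp: cbox_Pair_eq)
    then show "\<bar>F x s\<bar> \<le> max C 1" using C by force
  qed simp
qed

lemma continuous_on_strip_uniformly:
  fixes F :: "real \<Rightarrow> real \<Rightarrow> real"
  assumes "continuous_on (UNIV \<times> {a..b}) (\<lambda>(x, s). F x s)" "0 < e"
  obtains d where "0 < d" "\<And>x x' s s'. \<bar>x\<bar> \<le> K \<Longrightarrow> \<bar>x'\<bar> \<le> K \<Longrightarrow> s \<in> {a..b} \<Longrightarrow> s' \<in> {a..b} \<Longrightarrow>
    \<bar>x - x'\<bar> < d \<Longrightarrow> \<bar>s - s'\<bar> < d \<Longrightarrow> \<bar>F x s - F x' s'\<bar> < e"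
proof -
  have "cbox (-K, a) (K, b) \<subseteq> UNIV \<times> {a..b}" by (auto simp: cbox_Pair_eq)
  then have "uniformly_continuous_on (cbox (-K, a) (K, b)) (\<lambda>(x, s). F x s)"
    by (intro compact_uniformly_continuous[OF continuous_on_subset[OF assms(1)]] compact_cbox)
  then obtain d where d: "0 < d" "\<And>p p'. p \<in> cbox (-K, a) (K, b) \<Longrightarrow> p' \<in> cbox (-K, a) (K, b) \<Longrightarrow>
      dist p' p < d \<Longrightarrow> dist ((\<lambda>(x, s). F x s) p') ((\<lambda>(x, s). F x s) p) < e"
    unfolding uniformly_continuous_on_def using assms(2) by metis
  show ?thesis
  proof (rule that[of "d / 2"])
    fix x x' s s'
    assume h: "\<bar>x\<bar> \<le> K" "\<bar>x'\<bar> \<le> K" "s \<in> {a..b}" "s' \<in> {a..b}" "\<bar>x - x'\<bar> < d / 2" "\<bar>s - s'\<bar> < d / 2"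
    have "dist (x, s) (x', s') \<le> dist x x' + dist s s'"
      unfolding dist_Pair_Pair by (rule sqrt_sum_squares_le_sum_abs[THEN order.trans]) (simp add: dist_real_def)
    also have "\<dots> < d" using h by (simp add: dist_real_def)
    finally have "dist (x', s') (x, s) < d" by (simp only: dist_commute)
    then show "\<bar>F x s - F x' s'\<bar> < e"
      using d(2)[of "(x', s')" "(x, s)"] h by (simp add: dist_commute cbox_Pair_eq abs_le_iff dist_real_def)
  qed (use d in simp)
qed

lemma mvt_min_max:
  fixes f f' :: "real \<Rightarrow> real"
  assumes "\<And>x. min a b \<le> x \<Longrightarrow> x \<le> max a b \<Longrightarrow> (f has_real_derivative f' x) (at x)"
  obtains z where "min a b \<le> z" "z \<le> max a b" "f b - f a = (b - a) * f' z"
proof (cases a b rule: linorder_cases)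
  case less
  with MVT2[of a b f f'] assms show ?thesis by (metis less_eq_real_def max.absorb2 min.absorb1 that)
next
  case equal
  then show ?thesis using that[of a] by simp
next
  case greater
  with MVT2[of b a f f'] assms obtain z where "b < z" "z < a" "f a - f b = (a - b) * f' z"
    by (metis less_eq_real_def max.absorb1 min.absorb2)
  then show ?thesis using greater that[of z] by (simp add: algebra_simps)
qed

lemma continuous_on_slice:
  fixes F :: "real \<Rightarrow> real \<Rightarrow> real"
  assumes "continuous_on (UNIV \<times> S) (\<lambda>(b, s). F b s)" "s \<in> S"
  shows "continuous_on UNIV (\<lambda>b. F b s)"
proof -
  have "continuous_on UNIV (\<lambda>b. (b, s))" by (intro continuous_intros)
  from continuous_on_compose2[OF assms(1) this] show ?thesis using assms(2) by auto
qed

lemma continuous_on_along_path: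
  fixes F :: "real \<Rightarrow> real \<Rightarrow> real"
  assumes "continuous_on (UNIV \<times> S) (\<lambda>(b, s). F b s)" "continuous_on S p"
  shows "continuous_on S (\<lambda>s. F (p s) s)"
proof -
  have "continuous_on S (\<lambda>s. (p s, s))" by (intro continuous_intros assms(2))
  from continuous_on_compose2[OF assms(1) this] show ?thesis by auto
qed

lemma integral_mean_dev_le:
  fixes f :: "real \<Rightarrow> real"
  assumes "continuous_on {t0..t1} f" "t0 \<le> t1" "\<And>s. s \<in> {t0..t1} \<Longrightarrow> \<bar>f s - c\<bar> \<le> C"
  shows "\<bar>integral {t0..t1} f - (t1 - t0) * c\<bar> \<le> C * (t1 - t0)"
proof -
  have "integral {t0..t1} (\<lambda>s. f s - c) = integral {t0..t1} f - (t1 - t0) * c"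
    using Henstock_Kurzweil_Integration.integral_diff[OF integrable_continuous_interval[OF assms(1)]
        integrable_const_ivl[of c t0 t1]] assms(2) by simp
  moreover have "norm (integral {t0..t1} (\<lambda>s. f s - c)) \<le> C * (t1 - t0)"
    using assms by (intro integral_bound) (auto intro!: continuous_intros)
  ultimately show ?thesis by simp
qed

lemma first_order_expansion_bound:
  fixes G Gb Gt :: "real \<Rightarrow> real \<Rightarrow> real"
  assumes Gb: "\<And>z. min x y \<le> z \<Longrightarrow> z \<le> max x y \<Longrightarrow> ((\<lambda>b. G b t0) has_real_derivative Gb z t0) (at z)"
    and Gt: "\<And>s. t0 \<le> s \<Longrightarrow> s \<le> t1 \<Longrightarrow> ((\<lambda>s. G y s) has_real_derivative Gt y s) (at s)"
    and "t0 \<le> t1"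
    and Gt_bound: "\<And>s. t0 \<le> s \<Longrightarrow> s \<le> t1 \<Longrightarrow> \<bar>Gt y s\<bar> \<le> C"
    and Gb_close: "\<And>z. min x y \<le> z \<Longrightarrow> z \<le> max x y \<Longrightarrow> \<bar>Gb z t0 - Gb x t0\<bar> \<le> \<zeta>"
  shows "\<bar>G y t1 - G x t0 - Gb x t0 * (y - x)\<bar> \<le> C * (t1 - t0) + \<zeta> * \<bar>y - x\<bar>"
proof -
  obtain s where s: "min t0 t1 \<le> s" "s \<le> max t0 t1" "G y t1 - G y t0 = (t1 - t0) * Gt y s"
    using mvt_min_max[of t0 t1 "\<lambda>s. G y s" "Gt y"] Gt \<open>t0 \<le> t1\<close> by auto
  have "\<bar>G y t1 - G y t0\<bar> = (t1 - t0) * \<bar>Gt y s\<bar>" using s(3) \<open>t0 \<le> t1\<close> by (simp add: abs_mult)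
  also have "\<dots> \<le> (t1 - t0) * C" using s Gt_bound[of s] \<open>t0 \<le> t1\<close> by (intro mult_left_mono) auto
  finally have time: "\<bar>G y t1 - G y t0\<bar> \<le> C * (t1 - t0)" by (simp add: mult.commute)
  obtain z where z: "min x y \<le> z" "z \<le> max x y" "G y t0 - G x t0 = (y - x) * Gb z t0"
    using mvt_min_max[of x y "\<lambda>b. G b t0" "\<lambda>z. Gb z t0"] Gb by blast
  then have "\<bar>G y t0 - G x t0 - Gb x t0 * (y - x)\<bar> = \<bar>y - x\<bar> * \<bar>Gb z t0 - Gb x t0\<bar>"
    by (simp add: abs_mult[symmetric] algebra_simps)
  also have "\<dots> \<le> \<zeta> * \<bar>y - x\<bar>"
    using mult_right_mono[OF Gb_close[OF z(1,2)], of "\<bar>y - x\<bar>"] by (simp add: mult.commute)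
  finally have space: "\<bar>G y t0 - G x t0 - Gb x t0 * (y - x)\<bar> \<le> \<zeta> * \<bar>y - x\<bar>" .
  have "\<bar>G y t1 - G x t0 - Gb x t0 * (y - x)\<bar>
      \<le> \<bar>G y t1 - G y t0\<bar> + \<bar>G y t0 - G x t0 - Gb x t0 * (y - x)\<bar>"
    by (rule order_trans[OF _ abs_triangle_ineq]) simp
  with time space show ?thesis by linarith
qed

lemma grid_points:
  fixes t0 :: real
  assumes "0 < m" "0 < n" "0 \<le> t0"
  defines "\<delta> \<equiv> t0 / real (m * n)"
  shows "real (m * n) * \<delta> = t0" "real ((m + 1) * n) * \<delta> = t0 + t0 / real m"
    and "real n * \<delta> = t0 / real m"
    and "\<And>k. m * n \<le> k \<Longrightarrow> k \<le> (m + 1) * n \<Longrightarrow> t0 \<le> real k * \<delta> \<and> real k * \<delta> \<le> t0 + t0 / real m"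
proof -
  show mn: "real (m * n) * \<delta> = t0" and n: "real n * \<delta> = t0 / real m"
    using assms by (simp_all add: \<delta>_def)
  show m1n: "real ((m + 1) * n) * \<delta> = t0 + t0 / real m"
    using mn n by (simp add: algebra_simps)
  have "0 \<le> \<delta>" using assms by (simp add: \<delta>_def)
  then show "t0 \<le> real k * \<delta> \<and> real k * \<delta> \<le> t0 + t0 / real m"
    if "m * n \<le> k" "k \<le> (m + 1) * n" for k
    using mult_right_mono[of "real (m * n)" "real k" \<delta>] mult_right_mono[of "real k" "real ((m + 1) * n)" \<delta>]
      that mn m1n by (simp only: of_nat_le_iff)
qed

lemma exists_grid_step:
  assumes "0 < \<tau>0" "0 < t0"
  obtains m :: nat where "0 < m" "t0 / real m \<le> \<tau>0"
proof -
  obtain m :: nat where m: "t0 / \<tau>0 < real m" using reals_Archimedean2 by blast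
  moreover have "0 < t0 / \<tau>0" using assms by simp
  ultimately have "0 < m" by simp
  moreover have "t0 / real m \<le> \<tau>0" using m assms \<open>0 < m\<close> by (simp add: field_simps)
  ultimately show ?thesis by (rule that)
qed

lemma mult_sqrt_le_if_le_square:
  fixes \<tau> a C :: real
  assumes "\<tau> \<le> (a / C)\<^sup>2" "0 < C" "0 \<le> a"
  shows "C * sqrt \<tau> \<le> a" and "0 \<le> \<tau> \<Longrightarrow> C * \<tau> \<le> a * sqrt \<tau>"
proof -
  have "sqrt \<tau> \<le> a / C" using real_sqrt_le_mono[OF assms(1)] assms by simp
  then show le: "C * sqrt \<tau> \<le> a" using assms(2) by (simp add: field_simps)
  assume "0 \<le> \<tau>"
  then have "C * sqrt \<tau> * sqrt \<tau> \<le> a * sqrt \<tau>" by (intro mult_right_mono[OF le]) simp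
  then show "C * \<tau> \<le> a * sqrt \<tau>" using \<open>0 \<le> \<tau>\<close> by (simp add: mult.assoc)
qed

lemma constant_if_mult_deriv_eq_0:
  fixes f f' :: "real \<Rightarrow> real"
  assumes deriv: "\<And>y. (f has_real_derivative f' y) (at y)" and "\<And>y. f y * f' y = 0"
  shows "\<exists>k. \<forall>y. f y = k"
proof -
  have "((\<lambda>y. f y * f y) has_real_derivative 0) (at x)" for x
    using DERIV_mult[OF deriv deriv, of x] assms(2)[of x] by (simp add: mult.commute)
  then have square: "f y * f y = f 0 * f 0" for y by (rule DERIV_isconst_all[OF allI])
  have "connected (range f)"
    using deriv by (intro connected_continuous_image connected_UNIV continuous_at_imp_continuous_on
        ballI DERIV_isCont)
  have "f y = f 0" for y
  proof (rule ccontr)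
    assume "f y \<noteq> f 0"
    then have "f y = - f 0" using square[of y] by (simp add: square_eq_iff)
    then have endpoints: "f 0 \<in> range f" "- f 0 \<in> range f" by (metis rangeI)+
    have "0 \<in> range f"
    proof (cases "f 0 \<le> 0")
      case True
      then show ?thesis by (intro connectedD_interval[OF \<open>connected (range f)\<close> endpoints]) simp_all
    next
      case False
      then show ?thesis by (intro connectedD_interval[OF \<open>connected (range f)\<close> endpoints(2,1)]) simp_all
    qed
    then obtain w where "f w = 0" by auto
    then show False using square[of w] \<open>f y \<noteq> f 0\<close> \<open>f y = - f 0\<close> by simp
  qed
  then show ?thesis by blast
qed
lemma exp_if_deriv_eq_mult:
  fixes f :: "real \<Rightarrow> real"
  assumes "\<And>x. (f has_real_derivative a * f x) (at x)"
  shows "f x = exp (a * x) * f 0"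
proof -
  have "((\<lambda>x. f x * exp (- a * x)) has_real_derivative
      a * f y * exp (- a * y) + exp (- a * y) * (- a) * f y) (at y)" for y
    by (rule DERIV_mult[OF assms]) (auto intro!: derivative_eq_intros)
  then have "((\<lambda>x. f x * exp (- a * x)) has_real_derivative 0) (at y)" for y
    by (simp add: algebra_simps)
  from DERIV_isconst_all[OF allI[OF this], of x 0] have "f x * exp (- a * x) = f 0" by simp
  then show ?thesis by (simp add: exp_minus field_simps)
qed

section \<open>Independence and martingale transforms\<close>

lemma (in prob_space) prob_decseq_tendsto_0:
  assumes "range A \<subseteq> events" "decseq A" "AE \<omega> in M. \<omega> \<notin> (\<Inter>i. A i)"
  shows "(\<lambda>n. prob (A n)) \<longlonglongrightarrow> 0"
proof -
  have "(\<Inter>i. A i) \<in> events" using assms(1) by auto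
  then have "(\<Inter>i. A i) \<in> null_sets M" using assms(3) AE_iff_null_sets by blast
  then have "prob (\<Inter>i. A i) = 0" by (simp add: measure_eq_0_null_sets)
  then show ?thesis using finite_Lim_measure_decseq[OF assms(1,2)] by simp
qed

lemma (in prob_space) prob_Union_list_le:
  "set As \<subseteq> events \<Longrightarrow> prob (\<Union>(set As)) \<le> sum_list (map prob As)"
proof (induction As)
  case (Cons A As)
  then have "prob (A \<union> \<Union>(set As)) \<le> prob A + prob (\<Union>(set As))"
    by (intro measure_subadditive) auto
  with Cons show ?case by simp
qed simp

lemma (in prob_space) AE_eq_0_if_prob_abs_gt_le:
  fixes A :: "'a \<Rightarrow> real"
  assumes A: "A \<in> borel_measurable M"
    and small: "\<And>e \<eta>. 0 < e \<Longrightarrow> 0 < \<eta> \<Longrightarrow> prob {\<omega> \<in> space M. e < \<bar>A \<omega>\<bar>} \<le> \<eta>"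
  shows "AE \<omega> in M. A \<omega> = 0"
proof (rule AE_I')
  have "prob {\<omega> \<in> space M. 1 / real (Suc n) < \<bar>A \<omega>\<bar>} = 0" for n
    using small[of "1 / real (Suc n)"] field_le_epsilon[of "prob {\<omega> \<in> space M. 1 / real (Suc n) < \<bar>A \<omega>\<bar>}" 0]
    by (simp add: measure_le_0_iff)
  then have "{\<omega> \<in> space M. 1 / real (Suc n) < \<bar>A \<omega>\<bar>} \<in> null_sets M" for n
    using A by (intro null_setsI) (auto simp: emeasure_eq_measure)
  then show "(\<Union>n. {\<omega> \<in> space M. 1 / real (Suc n) < \<bar>A \<omega>\<bar>}) \<in> null_sets M" by (rule null_sets_UN)
  show "{\<omega> \<in> space M. \<not> A \<omega> = 0} \<subseteq> (\<Union>n. {\<omega> \<in> space M. 1 / real (Suc n) < \<bar>A \<omega>\<bar>})"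
  proof
    fix \<omega> assume "\<omega> \<in> {\<omega> \<in> space M. \<not> A \<omega> = 0}"
    moreover obtain n where "inverse (real (Suc n)) < \<bar>A \<omega>\<bar>"
      using calculation reals_Archimedean[of "\<bar>A \<omega>\<bar>"] by auto
    ultimately show "\<omega> \<in> (\<Union>n. {\<omega> \<in> space M. 1 / real (Suc n) < \<bar>A \<omega>\<bar>})"
      by (auto simp: inverse_eq_divide)
  qed
qed

(* X is measurable for the sigma-algebra generated by the D i, i \<in> I, in Doob-Dynkin form. *)
definition borel_fun_of :: "(nat \<Rightarrow> 'a \<Rightarrow> real) \<Rightarrow> nat set \<Rightarrow> ('a \<Rightarrow> real) \<Rightarrow> bool" where
  "borel_fun_of D I X \<longleftrightarrow>
     (\<exists>f \<in> borel_measurable (PiM I (\<lambda>_. borel)). \<forall>\<omega>. X \<omega> = f (restrict (\<lambda>i. D i \<omega>) I))"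

lemma borel_fun_of_const: "borel_fun_of D I (\<lambda>\<omega>. c)"
  unfolding borel_fun_of_def by (rule bexI[of _ "\<lambda>_. c"]) auto

lemma borel_fun_of_var: "i \<in> I \<Longrightarrow> borel_fun_of D I (D i)"
  unfolding borel_fun_of_def by (rule bexI[of _ "\<lambda>v. v i"]) (auto intro: measurable_component_singleton)

lemma borel_fun_of_compose:
  assumes "borel_fun_of D I X" "g \<in> borel_measurable borel"
  shows "borel_fun_of D I (\<lambda>\<omega>. g (X \<omega>))"
proof -
  obtain f where "f \<in> borel_measurable (PiM I (\<lambda>_. borel))" "\<And>\<omega>. X \<omega> = f (restrict (\<lambda>i. D i \<omega>) I)"
    using assms(1) unfolding borel_fun_of_def by blast
  then show ?thesis using assms(2) unfolding borel_fun_of_def by (intro bexI[of _ "\<lambda>v. g (f v)"]) auto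
qed

lemma borel_fun_of_binop:
  assumes "borel_fun_of D I X" "borel_fun_of D I Y"
    and g: "(\<lambda>(x, y). g x y) \<in> borel_measurable (borel \<Otimes>\<^sub>M borel)"
  shows "borel_fun_of D I (\<lambda>\<omega>. g (X \<omega>) (Y \<omega>))"
proof -
  obtain f f' where f: "f \<in> borel_measurable (PiM I (\<lambda>_. borel))" "f' \<in> borel_measurable (PiM I (\<lambda>_. borel))"
    and X: "\<And>\<omega>. X \<omega> = f (restrict (\<lambda>i. D i \<omega>) I)" and Y: "\<And>\<omega>. Y \<omega> = f' (restrict (\<lambda>i. D i \<omega>) I)"
    using assms(1,2) unfolding borel_fun_of_def by metis
  have "(\<lambda>v. g (f v) (f' v)) \<in> borel_measurable (PiM I (\<lambda>_. borel))"
    using measurable_compose[OF measurable_Pair[OF f] g] by simp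
  then show ?thesis unfolding borel_fun_of_def X Y by (intro bexI[of _ "\<lambda>v. g (f v) (f' v)"]) auto
qed

lemma borel_fun_of_add: "borel_fun_of D I X \<Longrightarrow> borel_fun_of D I Y \<Longrightarrow> borel_fun_of D I (\<lambda>\<omega>. X \<omega> + Y \<omega>)"
  by (rule borel_fun_of_binop) measurable

lemma borel_fun_of_diff: "borel_fun_of D I X \<Longrightarrow> borel_fun_of D I Y \<Longrightarrow> borel_fun_of D I (\<lambda>\<omega>. X \<omega> - Y \<omega>)"
  by (rule borel_fun_of_binop) measurable

lemma borel_fun_of_mult: "borel_fun_of D I X \<Longrightarrow> borel_fun_of D I Y \<Longrightarrow> borel_fun_of D I (\<lambda>\<omega>. X \<omega> * Y \<omega>)"
  by (rule borel_fun_of_binop) measurable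

lemma borel_fun_of_sum:
  "finite A \<Longrightarrow> (\<And>j. j \<in> A \<Longrightarrow> borel_fun_of D I (X j)) \<Longrightarrow> borel_fun_of D I (\<lambda>\<omega>. \<Sum>j\<in>A. X j \<omega>)"
  by (induction A rule: finite_induct) (auto intro: borel_fun_of_add borel_fun_of_const)

lemma borel_fun_of_prod:
  "finite A \<Longrightarrow> (\<And>j. j \<in> A \<Longrightarrow> borel_fun_of D I (X j)) \<Longrightarrow> borel_fun_of D I (\<lambda>\<omega>. \<Prod>j\<in>A. X j \<omega>)"
  by (induction A rule: finite_induct) (auto intro: borel_fun_of_mult borel_fun_of_const)

lemma borel_fun_of_mono:
  assumes "I \<subseteq> I'" "borel_fun_of D I X"
  shows "borel_fun_of D I' X"
proof -
  obtain f where f: "f \<in> borel_measurable (PiM I (\<lambda>_. borel))" "\<And>\<omega>. X \<omega> = f (restrict (\<lambda>i. D i \<omega>) I)"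
    using assms(2) unfolding borel_fun_of_def by blast
  show ?thesis unfolding borel_fun_of_def
  proof (rule bexI[of _ "\<lambda>v. f (restrict v I)"])
    show "(\<lambda>v. f (restrict v I)) \<in> borel_measurable (PiM I' (\<lambda>_. borel))"
      using measurable_comp[OF measurable_restrict_subset[OF assms(1)] f(1)] by (simp add: comp_def)
    show "\<forall>\<omega>. X \<omega> = f (restrict (restrict (\<lambda>i. D i \<omega>) I') I)"
      using f(2) assms(1) by (simp add: Int_absorb1)
  qed
qed

lemma borel_fun_of_measurable:
  assumes "\<And>i. i \<in> I \<Longrightarrow> D i \<in> borel_measurable M" "borel_fun_of D I X"
  shows "X \<in> borel_measurable M"
proof -
  obtain f where f: "f \<in> borel_measurable (PiM I (\<lambda>_. borel))" "\<And>\<omega>. X \<omega> = f (restrict (\<lambda>i. D i \<omega>) I)"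
    using assms(2) unfolding borel_fun_of_def by blast
  have "(\<lambda>\<omega>. restrict (\<lambda>i. D i \<omega>) I) \<in> measurable M (PiM I (\<lambda>_. borel))"
    using assms(1) by (intro measurable_restrict) auto
  from measurable_comp[OF this f(1)] f(2) show ?thesis
    by (simp add: comp_def fun_eq_iff cong: measurable_cong)
qed

context prob_space
begin

lemma indep_var_borel_fun_of:
  assumes "indep_vars (\<lambda>_. borel) D I0" "I \<subseteq> I0" "I' \<subseteq> I0" "I \<inter> I' = {}"
    and "borel_fun_of D I X" "borel_fun_of D I' W"
  shows "indep_var borel X borel W"
proof -
  obtain f where f: "f \<in> borel_measurable (PiM I (\<lambda>_. borel))" "\<And>\<omega>. X \<omega> = f (restrict (\<lambda>i. D i \<omega>) I)"
    using assms(5) unfolding borel_fun_of_def by blast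
  obtain g where g: "g \<in> borel_measurable (PiM I' (\<lambda>_. borel))" "\<And>\<omega>. W \<omega> = g (restrict (\<lambda>i. D i \<omega>) I')"
    using assms(6) unfolding borel_fun_of_def by blast
  have "indep_var (PiM I (\<lambda>_. borel)) (\<lambda>\<omega>. restrict (\<lambda>i. D i \<omega>) I)
      (PiM I' (\<lambda>_. borel)) (\<lambda>\<omega>. restrict (\<lambda>i. D i \<omega>) I')"
    by (rule indep_var_restrict[OF assms(1,4,2,3)])
  moreover have "X = f \<circ> (\<lambda>\<omega>. restrict (\<lambda>i. D i \<omega>) I)" "W = g \<circ> (\<lambda>\<omega>. restrict (\<lambda>i. D i \<omega>) I')"
    using f(2) g(2) by auto
  ultimately show ?thesis using indep_var_compose[OF _ f(1) g(1)] by simp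
qed

lemma indep_integral_mult_borel_fun_of:
  assumes "indep_vars (\<lambda>_. borel) D I0" "I \<subseteq> I0" "k \<in> I0" "k \<notin> I"
    and F: "borel_fun_of D I F" "integrable M F"
    and g: "g \<in> borel_measurable borel" "integrable M (\<lambda>\<omega>. g (D k \<omega>))"
  shows "integrable M (\<lambda>\<omega>. F \<omega> * g (D k \<omega>))"
    and "expectation (\<lambda>\<omega>. F \<omega> * g (D k \<omega>)) = expectation F * expectation (\<lambda>\<omega>. g (D k \<omega>))"
proof -
  have "borel_fun_of D {k} (\<lambda>\<omega>. g (D k \<omega>))" by (rule borel_fun_of_compose[OF borel_fun_of_var g(1)]) simp
  then have indep: "indep_var borel F borel (\<lambda>\<omega>. g (D k \<omega>))"
    using assms(1-4) by (intro indep_var_borel_fun_of[OF assms(1) _ _ _ F(1)]) auto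
  show "integrable M (\<lambda>\<omega>. F \<omega> * g (D k \<omega>))" by (rule indep_var_integrable[OF indep F(2) g(2)])
  show "expectation (\<lambda>\<omega>. F \<omega> * g (D k \<omega>)) = expectation F * expectation (\<lambda>\<omega>. g (D k \<omega>))"
    by (rule indep_var_lebesgue_integral[OF indep F(2) g(2)])
qed

lemma indep_var_prob_Int:
  assumes "indep_var borel X borel W" "S \<in> sets borel" "T \<in> sets borel"
  shows "prob ({\<omega> \<in> space M. X \<omega> \<in> S} \<inter> {\<omega> \<in> space M. W \<omega> \<in> T})
         = prob {\<omega> \<in> space M. X \<omega> \<in> S} * prob {\<omega> \<in> space M. W \<omega> \<in> T}"
proof -
  have "indep_set (sigma_sets (space M) {X -` A \<inter> space M | A. A \<in> sets borel})
      (sigma_sets (space M) {W -` A \<inter> space M | A. A \<in> sets borel})"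
    using assms(1) unfolding indep_var_eq by simp
  moreover have "X -` S \<inter> space M \<in> sigma_sets (space M) {X -` A \<inter> space M | A. A \<in> sets borel}"
    "W -` T \<inter> space M \<in> sigma_sets (space M) {W -` A \<inter> space M | A. A \<in> sets borel}"
    using assms(2,3) by (auto intro: sigma_sets.Basic)
  ultimately have "prob ((X -` S \<inter> space M) \<inter> (W -` T \<inter> space M))
      = prob (X -` S \<inter> space M) * prob (W -` T \<inter> space M)"
    unfolding indep_sets2_eq by blast
  moreover have "{\<omega> \<in> space M. X \<omega> \<in> S} = X -` S \<inter> space M" "{\<omega> \<in> space M. W \<omega> \<in> T} = W -` T \<inter> space M"
    by auto
  ultimately show ?thesis by simp
qed

lemma martingale_transform_step:
  assumes indep: "indep_vars (\<lambda>_. borel) D {..<Suc k}"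
    and Dk: "integrable M (D k)" "expectation (D k) = 0"
      "integrable M (\<lambda>\<omega>. (D k \<omega>)\<^sup>2)" "expectation (\<lambda>\<omega>. (D k \<omega>)\<^sup>2) = d"
    and S: "borel_fun_of D {..<k} S" "S \<in> borel_measurable M" "integrable M (\<lambda>\<omega>. (S \<omega>)\<^sup>2)"
    and a: "borel_fun_of D {..<k} a" "a \<in> borel_measurable M" "\<And>\<omega>. \<bar>a \<omega>\<bar> \<le> \<xi>"
  shows "integrable M (\<lambda>\<omega>. (S \<omega> + a \<omega> * D k \<omega>)\<^sup>2)"
    and "expectation (\<lambda>\<omega>. (S \<omega> + a \<omega> * D k \<omega>)\<^sup>2) \<le> expectation (\<lambda>\<omega>. (S \<omega>)\<^sup>2) + \<xi>\<^sup>2 * d"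
proof -
  have a2: "(a \<omega>)\<^sup>2 \<le> \<xi>\<^sup>2" for \<omega>
    using a(3)[of \<omega>] by (simp add: abs_le_square_iff[symmetric] order.trans[OF _ abs_ge_self])
  have "integrable M S" by (rule square_integrable_imp_integrable[OF S(2,3)])
  then have int_bound: "integrable M (\<lambda>\<omega>. \<xi> * \<bar>S \<omega>\<bar>)" by auto
  have bound: "norm (S \<omega> * a \<omega>) \<le> norm (\<xi> * \<bar>S \<omega>\<bar>)" for \<omega>
  proof -
    have "norm (S \<omega> * a \<omega>) = \<bar>a \<omega>\<bar> * \<bar>S \<omega>\<bar>" by (simp add: abs_mult)
    also have "\<dots> \<le> \<xi> * \<bar>S \<omega>\<bar>" by (rule mult_right_mono[OF a(3)]) simp
    also have "\<dots> \<le> norm (\<xi> * \<bar>S \<omega>\<bar>)" unfolding real_norm_def by (rule abs_ge_self)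
    finally show ?thesis .
  qed
  have "(\<lambda>\<omega>. S \<omega> * a \<omega>) \<in> borel_measurable M" using S(2) a(2) by measurable
  then have Sa_int: "integrable M (\<lambda>\<omega>. S \<omega> * a \<omega>)"
    using Bochner_Integration.integrable_bound[OF int_bound _ AE_I2[OF bound]] by blast
  have cross_int: "integrable M (\<lambda>\<omega>. S \<omega> * a \<omega> * D k \<omega>)"
    and cross_E: "expectation (\<lambda>\<omega>. S \<omega> * a \<omega> * D k \<omega>) = 0"
    using indep_integral_mult_borel_fun_of[OF indep, of "{..<k}" k "\<lambda>\<omega>. S \<omega> * a \<omega>" "\<lambda>x. x"]
      borel_fun_of_mult[OF S(1) a(1)] Sa_int Dk(1,2) by auto
  have a2_int: "integrable M (\<lambda>\<omega>. (a \<omega>)\<^sup>2)"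
    using a(2) a2 by (intro integrable_const_bound[where B="\<xi>\<^sup>2"]) auto
  have sq_int: "integrable M (\<lambda>\<omega>. (a \<omega>)\<^sup>2 * (D k \<omega>)\<^sup>2)"
    and sq_E: "expectation (\<lambda>\<omega>. (a \<omega>)\<^sup>2 * (D k \<omega>)\<^sup>2) = expectation (\<lambda>\<omega>. (a \<omega>)\<^sup>2) * d"
    using indep_integral_mult_borel_fun_of[OF indep, of "{..<k}" k "\<lambda>\<omega>. (a \<omega>)\<^sup>2" "\<lambda>x. x\<^sup>2"]
      borel_fun_of_compose[OF a(1), of "\<lambda>x. x\<^sup>2"] a2_int Dk(3,4) by auto
  have "expectation (\<lambda>\<omega>. (a \<omega>)\<^sup>2) \<le> expectation (\<lambda>\<omega>. \<xi>\<^sup>2)"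
    using a2_int a2 by (intro integral_mono) auto
  then have Ea2: "expectation (\<lambda>\<omega>. (a \<omega>)\<^sup>2) \<le> \<xi>\<^sup>2" by (simp add: prob_space)
  have expand: "(S \<omega> + a \<omega> * D k \<omega>)\<^sup>2 = (S \<omega>)\<^sup>2 + 2 * (S \<omega> * a \<omega> * D k \<omega>) + (a \<omega>)\<^sup>2 * (D k \<omega>)\<^sup>2" for \<omega>
    by (simp add: power2_eq_square algebra_simps)
  show "integrable M (\<lambda>\<omega>. (S \<omega> + a \<omega> * D k \<omega>)\<^sup>2)"
    unfolding expand using S(3) cross_int sq_int by auto
  have "0 \<le> expectation (\<lambda>\<omega>. (D k \<omega>)\<^sup>2)" by (rule integral_nonneg_AE) auto
  then have "expectation (\<lambda>\<omega>. (a \<omega>)\<^sup>2) * d \<le> \<xi>\<^sup>2 * d"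
    using Ea2 Dk(4) by (intro mult_right_mono) auto
  moreover have "expectation (\<lambda>\<omega>. (S \<omega> + a \<omega> * D k \<omega>)\<^sup>2)
      = expectation (\<lambda>\<omega>. (S \<omega>)\<^sup>2) + expectation (\<lambda>\<omega>. (a \<omega>)\<^sup>2 * (D k \<omega>)\<^sup>2)"
    unfolding expand using S(3) cross_int sq_int cross_E by simp
  ultimately show "expectation (\<lambda>\<omega>. (S \<omega> + a \<omega> * D k \<omega>)\<^sup>2) \<le> expectation (\<lambda>\<omega>. (S \<omega>)\<^sup>2) + \<xi>\<^sup>2 * d"
    using sq_E by simp
qed

lemma martingale_transform_second_moment_le:
  assumes indep: "\<And>K. indep_vars (\<lambda>_. borel) D {..<K}"
    and D: "\<And>i. D i \<in> borel_measurable M"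
      "\<And>i. integrable M (D i)" "\<And>i. expectation (D i) = 0"
      "\<And>i. integrable M (\<lambda>\<omega>. (D i \<omega>)\<^sup>2)" "\<And>i. expectation (\<lambda>\<omega>. (D i \<omega>)\<^sup>2) = d"
    and a: "\<And>j. borel_fun_of D {..<j} (a j)" "\<And>j \<omega>. \<bar>a j \<omega>\<bar> \<le> \<xi>"
  shows "integrable M (\<lambda>\<omega>. (\<Sum>j = k0..<k1. a j \<omega> * D j \<omega>)\<^sup>2) \<and>
         expectation (\<lambda>\<omega>. (\<Sum>j = k0..<k1. a j \<omega> * D j \<omega>)\<^sup>2) \<le> \<xi>\<^sup>2 * d * real (k1 - k0)"
proof (induction k1)
  case 0
  then show ?case by simp
next
  case (Suc k)
  show ?case
  proof (cases "k0 \<le> k")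
    case False
    then show ?thesis by simp
  next
    case True
    define S where "S \<omega> = (\<Sum>j = k0..<k. a j \<omega> * D j \<omega>)" for \<omega>
    have a_meas: "a j \<in> borel_measurable M" for j
      by (rule borel_fun_of_measurable[OF _ a(1)]) (use D(1) in auto)
    have S_fun: "borel_fun_of D {..<k} S"
      unfolding S_def by (intro borel_fun_of_sum borel_fun_of_mult borel_fun_of_var
          borel_fun_of_mono[OF _ a(1)]) auto
    have S_meas: "S \<in> borel_measurable M" unfolding S_def using a_meas D(1) by measurable
    have IH: "integrable M (\<lambda>\<omega>. (S \<omega>)\<^sup>2)" "expectation (\<lambda>\<omega>. (S \<omega>)\<^sup>2) \<le> \<xi>\<^sup>2 * d * real (k - k0)"
      using Suc.IH by (auto simp: S_def)
    note step = martingale_transform_step[OF indep D(2-5) S_fun S_meas IH(1) a(1) a_meas a(2)]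
    have split: "(\<lambda>\<omega>. (\<Sum>j = k0..<Suc k. a j \<omega> * D j \<omega>)\<^sup>2) = (\<lambda>\<omega>. (S \<omega> + a k \<omega> * D k \<omega>)\<^sup>2)"
      using True by (simp add: S_def)
    have "\<xi>\<^sup>2 * d * real (k - k0) + \<xi>\<^sup>2 * d = \<xi>\<^sup>2 * d * real (Suc k - k0)"
      using True by (simp add: Suc_diff_le algebra_simps)
    then show ?thesis unfolding split using step IH(2) by linarith
  qed
qed

end

(* Near two points with different values of V, a W independent of X would have to stay close to
   both values with positive probability. *)
lemma (in prob_space) continuous_const_if_approx_by_indep:
  fixes V :: "real \<Rightarrow> real" and X :: "'a \<Rightarrow> real"
  assumes V: "continuous_on UNIV V" and X: "X \<in> borel_measurable M"
    and support: "\<And>u v. u < v \<Longrightarrow> 0 < prob {\<omega> \<in> space M. u < X \<omega> \<and> X \<omega> < v}"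
    and approx: "\<And>\<epsilon> \<theta>. 0 < \<epsilon> \<Longrightarrow> 0 < \<theta> \<Longrightarrow> \<exists>W. W \<in> borel_measurable M \<and> indep_var borel X borel W
        \<and> prob {\<omega> \<in> space M. \<epsilon> < \<bar>W \<omega> - V (X \<omega>)\<bar>} < \<theta>"
  shows "V x = V y"
proof (rule ccontr)
  assume "V x \<noteq> V y"
  define \<gamma> where "\<gamma> = \<bar>V y - V x\<bar>"
  have \<gamma>: "0 < \<gamma>" using \<open>V x \<noteq> V y\<close> by (simp add: \<gamma>_def)
  have "\<exists>r>0. \<forall>z. \<bar>z - p\<bar> < r \<longrightarrow> \<bar>V z - V p\<bar> < \<gamma> / 8" for p
    using V \<gamma> unfolding continuous_on_iff dist_real_def by (metis UNIV_I zero_less_divide_iff zero_less_numeral)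
  then obtain rx ry where "0 < rx" "\<And>z. \<bar>z - x\<bar> < rx \<Longrightarrow> \<bar>V z - V x\<bar> < \<gamma> / 8"
    "0 < ry" "\<And>z. \<bar>z - y\<bar> < ry \<Longrightarrow> \<bar>V z - V y\<bar> < \<gamma> / 8"
    by meson
  then obtain r where r: "0 < r" "\<And>z. \<bar>z - x\<bar> < r \<Longrightarrow> \<bar>V z - V x\<bar> < \<gamma> / 8"
    "\<And>z. \<bar>z - y\<bar> < r \<Longrightarrow> \<bar>V z - V y\<bar> < \<gamma> / 8"
    by (intro that[of "min rx ry"]) auto
  define near where "near p = {\<omega> \<in> space M. p - r < X \<omega> \<and> X \<omega> < p + r}" for p
  have near_pos: "0 < prob (near p)" for p unfolding near_def using support r(1) by simp
  define \<theta> where "\<theta> = min (prob (near x)) (prob (near y)) / 4"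
  have \<theta>: "0 < \<theta>" using near_pos by (simp add: \<theta>_def)
  obtain W where W: "W \<in> borel_measurable M" "indep_var borel X borel W"
    and bad: "prob {\<omega> \<in> space M. \<gamma> / 8 < \<bar>W \<omega> - V (X \<omega>)\<bar>} < \<theta>"
    using approx[of "\<gamma> / 8" \<theta>] \<gamma> \<theta> by auto
  define Bad where "Bad = {\<omega> \<in> space M. \<gamma> / 8 < \<bar>W \<omega> - V (X \<omega>)\<bar>}"
  define close where "close = {\<omega> \<in> space M. W \<omega> \<in> {w. \<bar>w - V x\<bar> \<le> \<gamma> / 4}}"
  have [measurable]: "V \<in> borel_measurable borel" using V by (rule borel_measurable_continuous_onI)
  have sets: "Bad \<in> events" "close \<in> events" "near p \<in> events" for p
    unfolding Bad_def close_def near_def using W(1) X by measurable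
  have indep: "prob (near p \<inter> close) = prob (near p) * prob close" for p
    using indep_var_prob_Int[OF W(2), of "{p - r<..<p + r}" "{w. \<bar>w - V x\<bar> \<le> \<gamma> / 4}"]
    unfolding near_def close_def by simp
  have "near x \<subseteq> (near x \<inter> close) \<union> Bad"
  proof
    fix \<omega> assume \<omega>: "\<omega> \<in> near x"
    show "\<omega> \<in> (near x \<inter> close) \<union> Bad"
    proof (cases "\<omega> \<in> Bad")
      case False
      then have "\<bar>W \<omega> - V (X \<omega>)\<bar> \<le> \<gamma> / 8" using \<omega> by (auto simp: Bad_def near_def)
      moreover have "\<bar>V (X \<omega>) - V x\<bar> < \<gamma> / 8" using r(2) \<omega> by (auto simp: near_def abs_diff_less_iff)
      ultimately have "\<bar>W \<omega> - V x\<bar> \<le> \<gamma> / 4" by linarith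
      then show ?thesis using \<omega> by (simp add: close_def near_def)
    qed simp
  qed
  then have "prob (near x) \<le> prob ((near x \<inter> close) \<union> Bad)"
    using sets by (intro finite_measure_mono) auto
  also have "\<dots> \<le> prob (near x \<inter> close) + prob Bad"
    using sets by (intro measure_subadditive) auto
  finally have "prob (near x) \<le> prob (near x) * prob close + prob Bad" using indep[of x] by simp
  moreover have "prob Bad < prob (near x) / 4" using bad by (simp add: Bad_def \<theta>_def)
  ultimately have "prob (near x) * (1 - prob close) < prob (near x) * (1 / 4)"
    by (simp add: algebra_simps)
  then have "1 - prob close < 1 / 4" by (subst (asm) mult_less_cancel_left_pos[OF near_pos])
  then have close_large: "3 / 4 < prob close" by simp
  have "near y \<inter> close \<subseteq> Bad"
  proof
    fix \<omega> assume "\<omega> \<in> near y \<inter> close"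
    then have "\<bar>V (X \<omega>) - V y\<bar> < \<gamma> / 8" "\<bar>W \<omega> - V x\<bar> \<le> \<gamma> / 4" "\<omega> \<in> space M"
      using r(3) by (auto simp: near_def close_def abs_diff_less_iff)
    moreover have "\<gamma> \<le> \<bar>V y - V (X \<omega>)\<bar> + \<bar>V (X \<omega>) - W \<omega>\<bar> + \<bar>W \<omega> - V x\<bar>"
      unfolding \<gamma>_def by linarith
    ultimately show "\<omega> \<in> Bad" unfolding Bad_def using \<gamma> by (simp add: abs_minus_commute)
  qed
  then have "prob (near y) * prob close \<le> prob Bad"
    using indep[of y] sets finite_measure_mono[of "near y \<inter> close" Bad] by simp
  moreover have "prob Bad < prob (near y) / 4" using bad by (simp add: Bad_def \<theta>_def)
  ultimately have "prob (near y) * prob close < prob (near y) * (1 / 4)" by simp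
  then have "prob close < 1 / 4" by (subst (asm) mult_less_cancel_left_pos[OF near_pos])
  with close_large show False by simp
qed

section \<open>Brownian motion\<close>

lemma normal_density_le:
  assumes "0 < s"
  shows "normal_density 0 s x \<le> 1 / sqrt (2 * pi * s\<^sup>2)"
proof -
  have "exp (- (x - 0)\<^sup>2 / (2 * s\<^sup>2)) \<le> 1" using assms by simp
  then show ?thesis unfolding normal_density_def by (intro mult_left_le) auto
qed

locale brownian_motion =
  fixes M :: "'a measure" and B :: "real \<Rightarrow> 'a \<Rightarrow> real"
  assumes std_brownian_motion: "std_brownian_motion M B"

sublocale brownian_motion \<subseteq> prob_space M
  using std_brownian_motion unfolding std_brownian_motion_def by auto

context brownian_motion
begin

lemma B_measurable[measurable]: "0 \<le> t \<Longrightarrow> B t \<in> borel_measurable M"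
  using std_brownian_motion unfolding std_brownian_motion_def by auto

lemma AE_B_path: "AE \<omega> in M. B 0 \<omega> = 0 \<and> continuous_on {0..} (\<lambda>t. B t \<omega>)"
  using std_brownian_motion unfolding std_brownian_motion_def by auto

lemma increment_distributed:
  "0 \<le> s \<Longrightarrow> s < t \<Longrightarrow> distributed M lborel (\<lambda>\<omega>. B t \<omega> - B s \<omega>)
     (\<lambda>x. ennreal (normal_density 0 (sqrt (t - s)) x))"
  using std_brownian_motion unfolding std_brownian_motion_def by auto

lemma increment_moments:
  assumes "0 \<le> s" "s < t"
  shows "integrable M (\<lambda>\<omega>. B t \<omega> - B s \<omega>)"
    and "expectation (\<lambda>\<omega>. B t \<omega> - B s \<omega>) = 0"
    and "integrable M (\<lambda>\<omega>. (B t \<omega> - B s \<omega>)\<^sup>2)"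
    and "expectation (\<lambda>\<omega>. (B t \<omega> - B s \<omega>)\<^sup>2) = t - s"
proof -
  note D = increment_distributed[OF assms]
  have sd: "0 < sqrt (t - s)" using assms by simp
  show "integrable M (\<lambda>\<omega>. B t \<omega> - B s \<omega>)"
    using distributed_integrable[OF D, of "\<lambda>x. x"] integrable_normal_moment[OF sd, of 0 1] by simp
  show mean: "expectation (\<lambda>\<omega>. B t \<omega> - B s \<omega>) = 0"
    using normal_distributed_expectation[OF sd D] .
  show "integrable M (\<lambda>\<omega>. (B t \<omega> - B s \<omega>)\<^sup>2)"
    using distributed_integrable[OF D, of "\<lambda>x. x\<^sup>2"] integrable_normal_moment[OF sd, of 0 2] by simp
  have "variance (\<lambda>\<omega>. B t \<omega> - B s \<omega>) = (sqrt (t - s))\<^sup>2"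
    using normal_distributed_variance[OF sd D] .
  then show "expectation (\<lambda>\<omega>. (B t \<omega> - B s \<omega>)\<^sup>2) = t - s"
    using mean assms by simp
qed

lemma prob_increment_small_le:
  assumes "0 \<le> s" "s < t" "0 \<le> a"
  shows "prob {\<omega> \<in> space M. \<bar>B t \<omega> - B s \<omega>\<bar> \<le> a} \<le> a / sqrt (t - s)"
proof -
  define sd where "sd = sqrt (t - s)"
  have sd: "0 < sd" using assms by (simp add: sd_def)
  define c where "c = 1 / sqrt (2 * pi * sd\<^sup>2)"
  have c: "0 \<le> c" by (simp add: c_def)
  have "emeasure M ((\<lambda>\<omega>. B t \<omega> - B s \<omega>) -` {-a..a} \<inter> space M)
        = (\<integral>\<^sup>+x. ennreal (normal_density 0 sd x) * indicator {-a..a} x \<partial>lborel)"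
    unfolding sd_def by (rule distributed_emeasure[OF increment_distributed[OF assms(1,2)]]) simp
  also have "\<dots> \<le> (\<integral>\<^sup>+x. ennreal c * indicator {-a..a} x \<partial>lborel)"
    by (intro nn_integral_mono mult_right_mono) (use normal_density_le[OF sd] in \<open>auto simp: c_def\<close>)
  also have "\<dots> = ennreal (c * (2 * a))"
    using assms c by (simp add: nn_integral_cmult_indicator ennreal_mult)
  finally have "prob ((\<lambda>\<omega>. B t \<omega> - B s \<omega>) -` {-a..a} \<inter> space M) \<le> c * (2 * a)"
    using c assms by (simp add: emeasure_eq_measure ennreal_le_iff)
  moreover have "{\<omega> \<in> space M. \<bar>B t \<omega> - B s \<omega>\<bar> \<le> a} = (\<lambda>\<omega>. B t \<omega> - B s \<omega>) -` {-a..a} \<inter> space M"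
    by auto
  moreover have "c * (2 * a) \<le> a / sd"
  proof -
    have "sqrt 4 \<le> sqrt (2 * pi)" using pi_gt3 by (intro real_sqrt_le_mono) simp
    then have "2 \<le> sqrt (2 * pi)" by simp
    then have "a / sd * (2 / sqrt (2 * pi)) \<le> a / sd * 1"
      using sd assms by (intro mult_left_mono) auto
    moreover have "c * (2 * a) = a / sd * (2 / sqrt (2 * pi))"
      using sd by (simp add: c_def real_sqrt_mult field_simps)
    ultimately show ?thesis by simp
  qed
  ultimately show ?thesis by (simp add: sd_def)
qed

lemma prob_increment_large_le:
  assumes "0 \<le> s" "s < t" "0 < a"
  shows "prob {\<omega> \<in> space M. a \<le> \<bar>B t \<omega> - B s \<omega>\<bar>} \<le> (t - s) / a\<^sup>2"
proof -
  have "prob {\<omega> \<in> space M. a \<le> \<bar>B t \<omega> - B s \<omega>\<bar>} \<le> expectation (\<lambda>\<omega>. (B t \<omega> - B s \<omega>)\<^sup>2) / a\<^sup>2"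
    using assms increment_moments(3)[OF assms(1,2)] by (intro second_moment_method) auto
  then show ?thesis using increment_moments(4)[OF assms(1,2)] by simp
qed

lemma prob_increment_between_pos:
  assumes "0 \<le> s" "s < t" "u < v"
  shows "0 < prob {\<omega> \<in> space M. u < B t \<omega> - B s \<omega> \<and> B t \<omega> - B s \<omega> < v}"
proof -
  define sd where "sd = sqrt (t - s)"
  have sd: "0 < sd" using assms by (simp add: sd_def)
  define R where "R = max \<bar>u\<bar> \<bar>v\<bar>"
  define m where "m = 1 / sqrt (2 * pi * sd\<^sup>2) * exp (- R\<^sup>2 / (2 * sd\<^sup>2))"
  have m: "0 < m" using sd by (simp add: m_def)
  have density_ge: "m \<le> normal_density 0 sd x" if "x \<in> {u<..<v}" for x
  proof -
    have "\<bar>x\<bar> \<le> R" using that by (auto simp: R_def)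
    then have "x\<^sup>2 \<le> R\<^sup>2" by (metis abs_ge_zero power2_abs power_mono)
    then have "- R\<^sup>2 / (2 * sd\<^sup>2) \<le> - x\<^sup>2 / (2 * sd\<^sup>2)" using sd by (simp add: divide_right_mono)
    then show ?thesis unfolding m_def normal_density_def by (intro mult_left_mono) auto
  qed
  have "ennreal (m * (v - u)) = (\<integral>\<^sup>+x. ennreal m * indicator {u<..<v} x \<partial>lborel)"
    using m assms by (simp add: nn_integral_cmult_indicator ennreal_mult)
  also have "\<dots> \<le> (\<integral>\<^sup>+x. ennreal (normal_density 0 sd x) * indicator {u<..<v} x \<partial>lborel)"
    by (intro nn_integral_mono) (auto simp: indicator_def intro!: density_ge)
  also have "\<dots> = emeasure M ((\<lambda>\<omega>. B t \<omega> - B s \<omega>) -` {u<..<v} \<inter> space M)"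
    unfolding sd_def by (rule distributed_emeasure[OF increment_distributed[OF assms(1,2)], symmetric]) simp
  finally have "m * (v - u) \<le> prob ((\<lambda>\<omega>. B t \<omega> - B s \<omega>) -` {u<..<v} \<inter> space M)"
    by (simp add: emeasure_eq_measure ennreal_le_iff)
  moreover have "{\<omega> \<in> space M. u < B t \<omega> - B s \<omega> \<and> B t \<omega> - B s \<omega> < v}
      = (\<lambda>\<omega>. B t \<omega> - B s \<omega>) -` {u<..<v} \<inter> space M"
    by auto
  moreover have "0 < m * (v - u)" using m assms by simp
  ultimately show ?thesis by simp
qed

definition grid_incr :: "real \<Rightarrow> nat \<Rightarrow> 'a \<Rightarrow> real" where
  "grid_incr d i \<omega> = B (real (Suc i) * d) \<omega> - B (real i * d) \<omega>"

lemma sum_grid_incr: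
  "k0 \<le> k1 \<Longrightarrow> (\<Sum>i = k0..<k1. grid_incr d i \<omega>) = B (real k1 * d) \<omega> - B (real k0 * d) \<omega>"
  unfolding grid_incr_def by (rule sum_Suc_diff'[where f = "\<lambda>i. B (real i * d) \<omega>"])

lemma grid_incr_facts:
  assumes d: "0 < d"
  shows "\<And>K. indep_vars (\<lambda>_. borel) (grid_incr d) {..<K}"
    and "\<And>i. grid_incr d i \<in> borel_measurable M"
    and "\<And>i. integrable M (grid_incr d i)" "\<And>i. expectation (grid_incr d i) = 0"
    and "\<And>i. integrable M (\<lambda>\<omega>. (grid_incr d i \<omega>)\<^sup>2)"
    and "\<And>i. expectation (\<lambda>\<omega>. (grid_incr d i \<omega>)\<^sup>2) = d"
proof -
  have "\<forall>(ts :: nat \<Rightarrow> real) n. 0 \<le> ts 0 \<and> (\<forall>i<n. ts i < ts (Suc i)) \<longrightarrow>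
        indep_vars (\<lambda>_. borel) (\<lambda>i \<omega>. B (ts (Suc i)) \<omega> - B (ts i) \<omega>) {..<n}"
    using std_brownian_motion unfolding std_brownian_motion_def by auto
  from spec[OF spec[OF this, of "\<lambda>i. real i * d"]]
  show "indep_vars (\<lambda>_. borel) (grid_incr d) {..<K}" for K
    using d unfolding grid_incr_def[abs_def] by auto
  have s: "0 \<le> real i * d" "real i * d < real (Suc i) * d" for i using d by auto
  show "grid_incr d i \<in> borel_measurable M" for i
    using s[of i] s[of "Suc i"] unfolding grid_incr_def[abs_def] by measurable
  note moments = increment_moments[OF s]
  show "integrable M (grid_incr d i)" for i using moments(1) unfolding grid_incr_def[abs_def] .
  show "expectation (grid_incr d i) = 0" for i using moments(2) unfolding grid_incr_def[abs_def] .
  show "integrable M (\<lambda>\<omega>. (grid_incr d i \<omega>)\<^sup>2)" for i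
    using moments(3) unfolding grid_incr_def[abs_def] .
  show "expectation (\<lambda>\<omega>. (grid_incr d i \<omega>)\<^sup>2) = d" for i
    using moments(4)[of i] unfolding grid_incr_def[abs_def] by (simp add: algebra_simps)
qed

lemma continuous_eq_0_if_AE_eq_0:
  assumes F: "continuous_on UNIV F" and "0 < t" and AE: "AE \<omega> in M. F (B t \<omega>) = (0::real)"
  shows "F x = 0"
proof (rule ccontr)
  assume "F x \<noteq> 0"
  then obtain r where r: "0 < r" "\<And>y. dist y x < r \<Longrightarrow> dist (F y) (F x) < \<bar>F x\<bar>"
    using F unfolding continuous_on_iff by (metis UNIV_I zero_less_abs_iff)
  define P where "P = {\<omega> \<in> space M. x - r < B t \<omega> - B 0 \<omega> \<and> B t \<omega> - B 0 \<omega> < x + r}"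
  have [measurable]: "B t \<in> borel_measurable M" "B 0 \<in> borel_measurable M" using \<open>0 < t\<close> by auto
  have P_sets: "P \<in> events" unfolding P_def by measurable
  have "AE \<omega> in M. \<omega> \<notin> P"
    using AE AE_B_path
  proof eventually_elim
    case (elim \<omega>)
    then show ?case using r(2)[of "B t \<omega>"] by (auto simp: P_def dist_real_def abs_diff_less_iff)
  qed
  then have "prob P = 0"
    using P_sets by (simp add: AE_iff_null_sets measure_eq_0_null_sets)
  moreover have "0 < prob P"
    unfolding P_def using prob_increment_between_pos[of 0 t "x - r" "x + r"] \<open>0 < t\<close> r(1) by simp
  ultimately show False by simp
qed

definition path_exceeds :: "real \<Rightarrow> real \<Rightarrow> real \<Rightarrow> 'a set" where
  "path_exceeds a b K = {\<omega> \<in> space M. \<exists>s\<in>\<rat>. a \<le> s \<and> s \<le> b \<and> K < \<bar>B s \<omega>\<bar>}"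

definition path_oscillates :: "real \<Rightarrow> real \<Rightarrow> real \<Rightarrow> 'a set" where
  "path_oscillates t h \<rho> = {\<omega> \<in> space M. \<exists>s\<in>\<rat>. t \<le> s \<and> s \<le> t + h \<and> \<rho> < \<bar>B s \<omega> - B t \<omega>\<bar>}"

lemma path_exceeds_sets[measurable]: "0 \<le> a \<Longrightarrow> path_exceeds a b K \<in> events"
proof -
  assume "0 \<le> a"
  have "path_exceeds a b K = (\<Union>s\<in>\<rat> \<inter> {a..b}. {\<omega> \<in> space M. K < \<bar>B s \<omega>\<bar>})"
    unfolding path_exceeds_def by auto
  also have "\<dots> \<in> events"
  proof (rule sets.countable_UN'')
    show "countable (\<rat> \<inter> {a..b})" by (rule countable_subset[OF _ countable_rat]) auto
    fix s assume "s \<in> \<rat> \<inter> {a..b}"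
    then have "0 \<le> s" using \<open>0 \<le> a\<close> by auto
    then show "{\<omega> \<in> space M. K < \<bar>B s \<omega>\<bar>} \<in> events" by measurable
  qed
  finally show ?thesis .
qed

lemma path_oscillates_sets[measurable]: "0 \<le> t \<Longrightarrow> path_oscillates t h \<rho> \<in> events"
proof -
  assume "0 \<le> t"
  have "path_oscillates t h \<rho> = (\<Union>s\<in>\<rat> \<inter> {t..t + h}. {\<omega> \<in> space M. \<rho> < \<bar>B s \<omega> - B t \<omega>\<bar>})"
    unfolding path_oscillates_def by auto
  also have "\<dots> \<in> events"
  proof (rule sets.countable_UN'')
    show "countable (\<rat> \<inter> {t..t + h})" by (rule countable_subset[OF _ countable_rat]) auto
    fix s assume "s \<in> \<rat> \<inter> {t..t + h}"
    then have "0 \<le> s" using \<open>0 \<le> t\<close> by auto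
    then show "{\<omega> \<in> space M. \<rho> < \<bar>B s \<omega> - B t \<omega>\<bar>} \<in> events" using \<open>0 \<le> t\<close> by measurable
  qed
  finally show ?thesis .
qed

lemma path_oscillates_mono: "h \<le> h' \<Longrightarrow> path_oscillates t h \<rho> \<subseteq> path_oscillates t h' \<rho>"
  unfolding path_oscillates_def by (auto 0 4)

lemma path_exceeds_mono: "K \<le> K' \<Longrightarrow> path_exceeds a b K' \<subseteq> path_exceeds a b K"
  unfolding path_exceeds_def by (auto 0 4)

lemma prob_path_exceeds_tendsto_0:
  assumes "0 \<le> a"
  shows "(\<lambda>K::nat. prob (path_exceeds a b (real K))) \<longlonglongrightarrow> 0"
proof (rule prob_decseq_tendsto_0)
  show "range (\<lambda>K. path_exceeds a b (real K)) \<subseteq> events" using assms by auto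
  show "decseq (\<lambda>K. path_exceeds a b (real K))"
    by (intro decseq_SucI path_exceeds_mono) simp
  show "AE \<omega> in M. \<omega> \<notin> (\<Inter>K. path_exceeds a b (real K))"
    using AE_B_path
  proof eventually_elim
    case (elim \<omega>)
    have "compact ((\<lambda>t. B t \<omega>) ` {a..b})"
      using assms
      by (intro compact_continuous_image compact_Icc continuous_on_subset[OF elim[THEN conjunct2]]) auto
    then obtain C where "\<forall>y\<in>(\<lambda>t. B t \<omega>) ` {a..b}. norm y \<le> C"
      using compact_imp_bounded bounded_iff by blast
    then have C: "\<bar>B s \<omega>\<bar> \<le> C" if "s \<in> {a..b}" for s using that by auto
    obtain K :: nat where "C < real K" using reals_Archimedean2 by blast
    then have "\<bar>B s \<omega>\<bar> \<le> real K" if "s \<in> {a..b}" for s using C[OF that] by linarith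
    then have "\<omega> \<notin> path_exceeds a b (real K)" by (force simp: path_exceeds_def not_less)
    then show ?case by blast
  qed
qed

lemma prob_path_oscillates_small:
  assumes "0 \<le> t" "0 < \<rho>" "0 < \<eta>"
  obtains h where "0 < h" "prob (path_oscillates t h \<rho>) < \<eta>"
proof -
  have "(\<lambda>m. prob (path_oscillates t (1 / Suc m) \<rho>)) \<longlonglongrightarrow> 0"
  proof (rule prob_decseq_tendsto_0)
    show "range (\<lambda>m. path_oscillates t (1 / Suc m) \<rho>) \<subseteq> events" using assms by auto
    show "decseq (\<lambda>m. path_oscillates t (1 / Suc m) \<rho>)"
      by (intro decseq_SucI path_oscillates_mono) (simp add: frac_le)
    show "AE \<omega> in M. \<omega> \<notin> (\<Inter>m. path_oscillates t (1 / Suc m) \<rho>)"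
      using AE_B_path
    proof eventually_elim
      case (elim \<omega>)
      then obtain d where d: "0 < d" "\<And>s. s \<in> {0..} \<Longrightarrow> dist s t < d \<Longrightarrow> dist (B s \<omega>) (B t \<omega>) < \<rho>"
        using assms unfolding continuous_on_iff by (metis atLeast_iff)
      obtain m :: nat where "1 / d < real m" using reals_Archimedean2 by blast
      then have "1 / d < real (Suc m)" by simp
      then have "1 / real (Suc m) < d" using d(1) by (simp add: field_simps)
      then have "\<bar>B s \<omega> - B t \<omega>\<bar> < \<rho>" if "t \<le> s" "s \<le> t + 1 / Suc m" for s
        using d(2)[of s] that assms(1) by (simp add: dist_real_def)
      then have "\<omega> \<notin> path_oscillates t (1 / Suc m) \<rho>"
        by (force simp: path_oscillates_def not_less)
      then show ?case by blast
    qed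
  qed
  from order_tendstoD(2)[OF this assms(3)] obtain m where "prob (path_oscillates t (1 / Suc m) \<rho>) < \<eta>"
    unfolding eventually_sequentially by blast
  then show ?thesis using that[of "1 / Suc m"] by simp
qed

lemma abs_B_le_if_not_path_exceeds:
  assumes "\<omega> \<in> space M" "\<omega> \<notin> path_exceeds a b K" "continuous_on {0..} (\<lambda>t. B t \<omega>)"
    and "0 \<le> a" "a < b" "s \<in> {a..b}"
  shows "\<bar>B s \<omega>\<bar> \<le> K"
proof (rule abs_le_if_abs_le_on_rationals[of a b "\<lambda>t. B t \<omega>"])
  show "continuous_on {a..b} (\<lambda>t. B t \<omega>)"
    by (rule continuous_on_subset[OF assms(3)]) (use assms(4) in auto)
qed (use assms in \<open>auto simp: path_exceeds_def not_less\<close>)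

lemma abs_B_diff_le_if_not_path_oscillates:
  assumes "\<omega> \<in> space M" "\<omega> \<notin> path_oscillates t h \<rho>" "continuous_on {0..} (\<lambda>t. B t \<omega>)"
    and "0 \<le> t" "0 < h" "s \<in> {t..t + h}"
  shows "\<bar>B s \<omega> - B t \<omega>\<bar> \<le> \<rho>"
proof (rule abs_le_if_abs_le_on_rationals[of t "t + h" "\<lambda>s. B s \<omega> - B t \<omega>"])
  show "continuous_on {t..t + h} (\<lambda>s. B s \<omega> - B t \<omega>)"
    using assms(3,4) by (intro continuous_intros continuous_on_subset[OF assms(3)]) auto
qed (use assms in \<open>auto simp: path_oscillates_def not_less\<close>)

lemma ito_sum_measurable:
  assumes "\<And>s. 0 \<le> s \<Longrightarrow> Y s \<in> borel_measurable M" "0 \<le> t"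
  shows "ito_sum Y B t n \<in> borel_measurable M"
  unfolding ito_sum_def[abs_def] using assms
  by (intro borel_measurable_sum borel_measurable_times borel_measurable_diff B_measurable) auto

lemma ito_sum_refine_diff:
  fixes t0 :: real
  assumes "0 < m" "0 < n"
  defines "\<delta> \<equiv> t0 / real (m * n)"
  shows "ito_sum Y B (t0 + t0 / real m) ((m + 1) * n) \<omega> - ito_sum Y B t0 (m * n) \<omega>
       = (\<Sum>k = m * n..<(m + 1) * n. Y (real k * \<delta>) \<omega> * grid_incr \<delta> k \<omega>)"
proof -
  define c where "c = real m + 1"
  have "t0 + t0 / real m = t0 * c / real m" "real ((m + 1) * n) = c * real n" "0 < c"
    using assms by (simp_all add: c_def field_simps)
  then have grid1: "real k * (t0 + t0 / real m) / real ((m + 1) * n) = real k * \<delta>" for k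
    using assms by (simp add: \<delta>_def field_simps)
  have grid0: "real k * t0 / real (m * n) = real k * \<delta>" for k by (simp add: \<delta>_def)
  have "ito_sum Y B (t0 + t0 / real m) ((m + 1) * n) \<omega> = (\<Sum>k<(m + 1) * n. Y (real k * \<delta>) \<omega> * grid_incr \<delta> k \<omega>)"
    "ito_sum Y B t0 (m * n) \<omega> = (\<Sum>k<m * n. Y (real k * \<delta>) \<omega> * grid_incr \<delta> k \<omega>)"
    by (simp_all only: ito_sum_def grid_incr_def grid0 grid1)
  moreover have "sum f {..<m * n} + sum f {m * n..<(m + 1) * n} = sum f {..<(m + 1) * n}" for f :: "nat \<Rightarrow> real"
    unfolding lessThan_atLeast0 by (rule sum.atLeastLessThan_concat) auto
  ultimately show ?thesis by (metis add_diff_cancel_left')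
qed

lemma ito_integral_increment_approx:
  assumes J: "is_ito_integral M B Y J" and Y: "\<And>s. 0 \<le> s \<Longrightarrow> Y s \<in> borel_measurable M"
    and "0 < t0" "0 < m" "0 < e" "0 < \<eta>"
  obtains n where "0 < n" "prob {\<omega> \<in> space M. e < \<bar>J (t0 + t0 / real m) \<omega> - J t0 \<omega> -
      (\<Sum>k = m * n..<(m + 1) * n. Y (real k * (t0 / real (m * n))) \<omega> * grid_incr (t0 / real (m * n)) k \<omega>)\<bar>} < \<eta>"
proof -
  define t1 where "t1 = t0 + t0 / real m"
  have t: "0 \<le> t0" "0 \<le> t1" using assms by (auto simp: t1_def)
  define A where "A t n = {\<omega> \<in> space M. e / 2 < \<bar>ito_sum Y B t n \<omega> - J t \<omega>\<bar>}" for t n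
  have A_sets: "A t n \<in> events" if "0 \<le> t" for t n
  proof -
    have "J t \<in> borel_measurable M" using J that unfolding is_ito_integral_def by auto
    then show ?thesis using ito_sum_measurable[OF Y that] unfolding A_def by measurable
  qed
  have ev: "eventually (\<lambda>n. prob (A t n) < \<eta> / 2) sequentially" if "0 \<le> t" for t
  proof (rule order_tendstoD(2))
    have "\<forall>\<epsilon>>0. (\<lambda>n. prob {\<omega> \<in> space M. \<epsilon> < \<bar>ito_sum Y B t n \<omega> - J t \<omega>\<bar>}) \<longlonglongrightarrow> 0"
      using J that unfolding is_ito_integral_def by simp
    then show "(\<lambda>n. prob (A t n)) \<longlonglongrightarrow> 0"
      unfolding A_def by (rule mp[OF spec[of _ "e / 2"]]) (use assms(5) in simp)
  qed (use assms(6) in simp)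
  obtain N where N: "\<And>n. N \<le> n \<Longrightarrow> prob (A t0 n) < \<eta> / 2 \<and> prob (A t1 n) < \<eta> / 2"
    using eventually_conj[OF ev[OF t(1)] ev[OF t(2)]] unfolding eventually_sequentially by blast
  define n where "n = Suc N"
  have "N \<le> m * n" "N \<le> (m + 1) * n" using assms(4) by (simp_all add: n_def trans_le_add2)
  then have small: "prob (A t0 (m * n)) < \<eta> / 2" "prob (A t1 ((m + 1) * n)) < \<eta> / 2" using N by auto
  let ?S = "\<lambda>\<omega>. \<Sum>k = m * n..<(m + 1) * n.
    Y (real k * (t0 / real (m * n))) \<omega> * grid_incr (t0 / real (m * n)) k \<omega>"
  let ?E = "{\<omega> \<in> space M. e < \<bar>J t1 \<omega> - J t0 \<omega> - ?S \<omega>\<bar>}"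
  have "?E \<subseteq> A t0 (m * n) \<union> A t1 ((m + 1) * n)"
  proof
    fix \<omega> assume "\<omega> \<in> ?E"
    moreover have "?S \<omega> = ito_sum Y B t1 ((m + 1) * n) \<omega> - ito_sum Y B t0 (m * n) \<omega>"
      using ito_sum_refine_diff[OF assms(4), of n Y t0 \<omega>] by (simp add: t1_def n_def)
    ultimately show "\<omega> \<in> A t0 (m * n) \<union> A t1 ((m + 1) * n)"
      unfolding A_def by (auto simp: abs_if split: if_split_asm)
  qed
  then have "prob ?E \<le> prob (A t0 (m * n) \<union> A t1 ((m + 1) * n))"
    using A_sets t by (intro finite_measure_mono) auto
  also have "\<dots> \<le> prob (A t0 (m * n)) + prob (A t1 ((m + 1) * n))"
    using A_sets t by (intro measure_subadditive) auto
  finally show ?thesis using that[of n] small by (simp add: n_def t1_def)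
qed

lemma prob_stopped_transform_ge:
  fixes k0 k1 :: nat
  assumes "0 < d" "0 < c" "0 \<le> \<xi>"
    and g: "\<And>j. k0 \<le> j \<Longrightarrow> borel_fun_of (grid_incr d) {..<j} (g j)"
  defines "stopped \<equiv> \<lambda>\<omega>. \<Sum>j = k0..<k1.
      g j \<omega> * (\<Prod>i = k0..j. indicator {-\<xi>..\<xi>} (g i \<omega>)) * grid_incr d j \<omega>"
  shows "stopped \<in> borel_measurable M"
    and "prob {\<omega> \<in> space M. c \<le> \<bar>stopped \<omega>\<bar>} \<le> \<xi>\<^sup>2 * d * real (k1 - k0) / c\<^sup>2"
proof -
  note incr = grid_incr_facts[OF assms(1)]
  (* The indicators stop the integrand at the first index where |g| exceeds xi, which keeps it
     bounded by xi without destroying adaptedness. *)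
  define a where "a j \<omega> = (if k0 \<le> j then g j \<omega> * (\<Prod>i = k0..j. indicator {-\<xi>..\<xi>} (g i \<omega>)) else 0)"
    for j \<omega>
  have a_fun: "borel_fun_of (grid_incr d) {..<j} (a j)" for j
  proof (cases "k0 \<le> j")
    case True
    have "borel_fun_of (grid_incr d) {..<j} (g i)" if "i \<in> {k0..j}" for i
      using that by (intro borel_fun_of_mono[OF _ g]) auto
    then have "borel_fun_of (grid_incr d) {..<j} (\<lambda>\<omega>. \<Prod>i = k0..j. indicator {-\<xi>..\<xi>} (g i \<omega>))"
      by (intro borel_fun_of_prod) (auto intro: borel_fun_of_compose[where g="indicator {-\<xi>..\<xi>}"])
    with True show ?thesis unfolding a_def by (simp add: borel_fun_of_mult g)
  next
    case False
    then have "a j = (\<lambda>\<omega>. 0)" by (simp add: a_def fun_eq_iff)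
    then show ?thesis by (simp add: borel_fun_of_const)
  qed
  have a_bound: "\<bar>a j \<omega>\<bar> \<le> \<xi>" for j \<omega>
  proof (cases "k0 \<le> j \<and> (\<forall>i\<in>{k0..j}. g i \<omega> \<in> {-\<xi>..\<xi>})")
    case True
    then have "(\<Prod>i = k0..j. indicator {-\<xi>..\<xi>} (g i \<omega>) :: real) = 1" by (intro prod.neutral) auto
    moreover have "j \<in> {k0..j}" using True by simp
    then have "g j \<omega> \<in> {-\<xi>..\<xi>}" using True by blast
    then have "\<bar>g j \<omega>\<bar> \<le> \<xi>" by auto
    ultimately show ?thesis using True by (simp add: a_def)
  next
    case False
    have "a j \<omega> = 0"
    proof (cases "k0 \<le> j")
      case True
      with False obtain i where "i \<in> {k0..j}" "g i \<omega> \<notin> {-\<xi>..\<xi>}" by blast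
      then have "(\<Prod>i = k0..j. indicator {-\<xi>..\<xi>} (g i \<omega>) :: real) = 0"
        by (intro prod_zero) (auto intro!: bexI[of _ i])
      then show ?thesis by (simp add: a_def)
    qed (simp add: a_def)
    then show ?thesis using assms(3) by simp
  qed
  have stopped_eq: "stopped = (\<lambda>\<omega>. \<Sum>j = k0..<k1. a j \<omega> * grid_incr d j \<omega>)"
    unfolding stopped_def a_def by (intro ext sum.cong) auto
  have "a j \<in> borel_measurable M" for j by (rule borel_fun_of_measurable[OF _ a_fun]) (use incr(2) in auto)
  then show meas: "stopped \<in> borel_measurable M" unfolding stopped_eq using incr(2) by measurable
  have moment: "integrable M (\<lambda>\<omega>. (stopped \<omega>)\<^sup>2)"
    "expectation (\<lambda>\<omega>. (stopped \<omega>)\<^sup>2) \<le> \<xi>\<^sup>2 * d * real (k1 - k0)"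
    using martingale_transform_second_moment_le[OF incr a_fun a_bound] unfolding stopped_eq by auto
  have "prob {\<omega> \<in> space M. c \<le> \<bar>stopped \<omega>\<bar>} \<le> expectation (\<lambda>\<omega>. (stopped \<omega>)\<^sup>2) / c\<^sup>2"
    by (rule second_moment_method[OF meas moment(1) assms(2)])
  also have "\<dots> \<le> \<xi>\<^sup>2 * d * real (k1 - k0) / c\<^sup>2"
    using moment(2) by (simp add: divide_right_mono)
  finally show "prob {\<omega> \<in> space M. c \<le> \<bar>stopped \<omega>\<bar>} \<le> \<xi>\<^sup>2 * d * real (k1 - k0) / c\<^sup>2" .
qed

end

section \<open>Ito equations for functions of Brownian motion\<close>

locale ito_equation = brownian_motion +
  fixes G D :: "real \<Rightarrow> real \<Rightarrow> real" and \<sigma> :: real and J :: "real \<Rightarrow> 'a \<Rightarrow> real"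
  assumes G_cont: "continuous_on (UNIV \<times> {0..}) (\<lambda>(b, s). G b s)"
    and D_cont: "continuous_on (UNIV \<times> {0..}) (\<lambda>(b, s). D b s)"
    and ito_integral: "is_ito_integral M B (\<lambda>s \<omega>. G (B s \<omega>) s) J"
    and equation: "AE \<omega> in M. \<forall>t\<ge>0.
      G (B t \<omega>) t = G (B 0 \<omega>) 0 + integral {0..t} (\<lambda>s. D (B s \<omega>) s) + \<sigma> * J t \<omega>"
begin

lemma G_measurable: "0 \<le> s \<Longrightarrow> (\<lambda>b. G b s) \<in> borel_measurable borel"
  using continuous_on_slice[OF G_cont] by (auto intro: borel_measurable_continuous_onI)

lemma G_B_measurable[measurable]: "0 \<le> s \<Longrightarrow> (\<lambda>\<omega>. G (B s \<omega>) s) \<in> borel_measurable M"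
  by (rule measurable_compose[OF B_measurable G_measurable])

lemma J_measurable[measurable]: "0 \<le> t \<Longrightarrow> J t \<in> borel_measurable M"
  using ito_integral unfolding is_ito_integral_def by auto

lemma AE_increment_equation:
  "AE \<omega> in M. B 0 \<omega> = 0 \<and> continuous_on {0..} (\<lambda>t. B t \<omega>) \<and>
     (\<forall>t0 t1. 0 \<le> t0 \<longrightarrow> t0 \<le> t1 \<longrightarrow> G (B t1 \<omega>) t1 - G (B t0 \<omega>) t0
        = integral {t0..t1} (\<lambda>s. D (B s \<omega>) s) + \<sigma> * (J t1 \<omega> - J t0 \<omega>))"
  using AE_B_path equation
proof eventually_elim
  case (elim \<omega>)
  have "integral {0..t0} (\<lambda>s. D (B s \<omega>) s) + integral {t0..t1} (\<lambda>s. D (B s \<omega>) s)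
      = integral {0..t1} (\<lambda>s. D (B s \<omega>) s)" if "0 \<le> t0" "t0 \<le> t1" for t0 t1
  proof (rule Henstock_Kurzweil_Integration.integral_combine[OF that integrable_continuous_interval])
    show "continuous_on {0..t1} (\<lambda>s. D (B s \<omega>) s)"
      using continuous_on_along_path[OF D_cont elim(1)[THEN conjunct2]]
      by (rule continuous_on_subset) auto
  qed
  with elim show ?case by (auto simp: algebra_simps)
qed

end

section \<open>Identification of the diffusion coefficient\<close>

locale smooth_ito_equation = ito_equation +
  fixes Gb Gt :: "real \<Rightarrow> real \<Rightarrow> real"
  assumes G_deriv_b: "\<And>b s. 0 < s \<Longrightarrow> ((\<lambda>b. G b s) has_real_derivative Gb b s) (at b)"
    and G_deriv_t: "\<And>b s. 0 < s \<Longrightarrow> ((\<lambda>s. G b s) has_real_derivative Gt b s) (at s)"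
    and Gb_cont: "continuous_on (UNIV \<times> {0<..}) (\<lambda>(b, s). Gb b s)"
    and Gt_cont: "continuous_on (UNIV \<times> {0<..}) (\<lambda>(b, s). Gt b s)"
begin

lemma diffusion_defect_pathwise:
  fixes k0 k1 :: nat and \<omega> :: 'a
  assumes path: "B 0 \<omega> = 0" "continuous_on {0..} (\<lambda>t. B t \<omega>)"
    and incr_eq: "G (B t1 \<omega>) t1 - G (B t0 \<omega>) t0
      = integral {t0..t1} (\<lambda>s. D (B s \<omega>) s) + \<sigma> * (J t1 \<omega> - J t0 \<omega>)"
    and grid: "0 < \<delta>" "k0 \<le> k1" "real k0 * \<delta> = t0" "real k1 * \<delta> = t1" "0 < t0"
    and D_bound: "\<And>s. s \<in> {t0..t1} \<Longrightarrow> \<bar>D (B s \<omega>) s\<bar> \<le> CD"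
    and Gt_bound: "\<And>s. s \<in> {t0..t1} \<Longrightarrow> \<bar>Gt (B t1 \<omega>) s\<bar> \<le> CG"
    and Gb_close: "\<And>z. min (B t0 \<omega>) (B t1 \<omega>) \<le> z \<Longrightarrow> z \<le> max (B t0 \<omega>) (B t1 \<omega>) \<Longrightarrow>
      \<bar>Gb z t0 - Gb (B t0 \<omega>) t0\<bar> \<le> \<zeta>"
    and G_close: "\<And>s. s \<in> {t0..t1} \<Longrightarrow> \<bar>G (B s \<omega>) s - G (B t0 \<omega>) t0\<bar> \<le> \<xi>"
  defines "g \<equiv> \<lambda>j \<omega>. G (\<Sum>i<j. grid_incr \<delta> i \<omega>) (real j * \<delta>) - G (\<Sum>i<k0. grid_incr \<delta> i \<omega>) t0"
  shows "\<bar>Gb (B t0 \<omega>) t0 - \<sigma> * G (B t0 \<omega>) t0\<bar> * \<bar>B t1 \<omega> - B t0 \<omega>\<bar>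
     \<le> CD * (t1 - t0) + CG * (t1 - t0) + \<zeta> * \<bar>B t1 \<omega> - B t0 \<omega>\<bar>
       + \<bar>\<sigma>\<bar> * \<bar>J t1 \<omega> - J t0 \<omega> - (\<Sum>k = k0..<k1. G (B (real k * \<delta>) \<omega>) (real k * \<delta>) * grid_incr \<delta> k \<omega>)\<bar>
       + \<bar>\<sigma>\<bar> * \<bar>\<Sum>j = k0..<k1. g j \<omega> * (\<Prod>i = k0..j. indicator {-\<xi>..\<xi>} (g i \<omega>)) * grid_incr \<delta> j \<omega>\<bar>"
proof -
  define x \<Delta> where "x = B t0 \<omega>" and "\<Delta> = B t1 \<omega> - B t0 \<omega>"
  define S where "S = (\<Sum>k = k0..<k1. G (B (real k * \<delta>) \<omega>) (real k * \<delta>) * grid_incr \<delta> k \<omega>)"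
  define stopped where
    "stopped = (\<Sum>j = k0..<k1. g j \<omega> * (\<Prod>i = k0..j. indicator {-\<xi>..\<xi>} (g i \<omega>)) * grid_incr \<delta> j \<omega>)"
  have "real k0 * \<delta> \<le> real k1 * \<delta>" using grid(1,2) by (simp add: mult_right_mono)
  then have t01: "t0 \<le> t1" using grid(3,4) by simp
  have g_eq: "g j \<omega> = G (B (real j * \<delta>) \<omega>) (real j * \<delta>) - G x t0" for j
    using sum_grid_incr[of 0 j \<delta> \<omega>] sum_grid_incr[of 0 k0 \<delta> \<omega>] path(1) grid(3)
    by (simp add: g_def x_def lessThan_atLeast0)
  have grid_in: "real j * \<delta> \<in> {t0..t1}" if "k0 \<le> j" "j \<le> k1" for j
    using that grid(1,3,4) by (auto intro: mult_right_mono)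
  have g_small: "g i \<omega> \<in> {-\<xi>..\<xi>}" if "k0 \<le> i" "i \<le> k1" for i
    using G_close[OF grid_in[OF that]] by (simp add: g_eq x_def abs_le_iff)
  have "(\<Prod>i = k0..j. indicator {-\<xi>..\<xi>} (g i \<omega>) :: real) = 1" if "j \<in> {k0..<k1}" for j
    using that g_small by (intro prod.neutral) auto
  then have "stopped = (\<Sum>j = k0..<k1. (G (B (real j * \<delta>) \<omega>) (real j * \<delta>) - G x t0) * grid_incr \<delta> j \<omega>)"
    unfolding stopped_def by (intro sum.cong) (simp_all add: g_eq)
  also have "\<dots> = S - G x t0 * \<Delta>"
    using sum_grid_incr[OF grid(2), of \<delta> \<omega>] grid(3,4)
    by (simp add: S_def \<Delta>_def x_def left_diff_distrib sum_subtractf sum_distrib_left[symmetric])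
  finally have stopped_eq: "stopped = S - G x t0 * \<Delta>" .
  have "continuous_on {t0..t1} (\<lambda>s. D (B s \<omega>) s)"
    by (rule continuous_on_subset[OF continuous_on_along_path[OF D_cont path(2)]]) (use grid(5) in auto)
  then have integral_bound: "\<bar>integral {t0..t1} (\<lambda>s. D (B s \<omega>) s)\<bar> \<le> CD * (t1 - t0)"
    using integral_mean_dev_le[of t0 t1 _ 0 CD] D_bound t01 by simp
  have expansion: "\<bar>G (B t1 \<omega>) t1 - G x t0 - Gb x t0 * \<Delta>\<bar> \<le> CG * (t1 - t0) + \<zeta> * \<bar>\<Delta>\<bar>"
    unfolding x_def \<Delta>_def
    by (rule first_order_expansion_bound[where G=G and Gb=Gb and Gt=Gt])
       (use G_deriv_b G_deriv_t grid(5) t01 Gt_bound Gb_close in auto)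
  (* Compare the increment of G given by the equation with its first-order expansion. *)
  have "(Gb x t0 - \<sigma> * G x t0) * \<Delta> = integral {t0..t1} (\<lambda>s. D (B s \<omega>) s)
      - (G (B t1 \<omega>) t1 - G x t0 - Gb x t0 * \<Delta>) + \<sigma> * (J t1 \<omega> - J t0 \<omega> - S) + \<sigma> * stopped"
    using incr_eq unfolding stopped_eq x_def by (simp add: algebra_simps)
  then have "\<bar>Gb x t0 - \<sigma> * G x t0\<bar> * \<bar>\<Delta>\<bar> \<le> \<bar>integral {t0..t1} (\<lambda>s. D (B s \<omega>) s)\<bar>
      + \<bar>G (B t1 \<omega>) t1 - G x t0 - Gb x t0 * \<Delta>\<bar> + \<bar>\<sigma>\<bar> * \<bar>J t1 \<omega> - J t0 \<omega> - S\<bar> + \<bar>\<sigma>\<bar> * \<bar>stopped\<bar>"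
    by (simp add: abs_mult[symmetric])
  then show ?thesis using integral_bound expansion unfolding x_def \<Delta>_def S_def stopped_def by linarith
qed

lemma prob_diffusion_defect_gt_le:
  assumes t0: "0 < t0" and \<sigma>: "\<sigma> \<noteq> 0" and e: "0 < e" and \<eta>: "0 < \<eta>"
  shows "prob {\<omega> \<in> space M. e < \<bar>Gb (B t0 \<omega>) t0 - \<sigma> * G (B t0 \<omega>) t0\<bar>} \<le> \<eta>"
proof -
  define \<kappa> \<epsilon> L where "\<kappa> = \<eta> / 8" and "\<epsilon> = e * \<kappa> / 4" and "L = sqrt (8 / \<eta>)"
  define \<zeta> \<xi> where "\<zeta> = \<epsilon> / (2 * L)" and "\<xi> = \<epsilon> * sqrt (\<eta> / 8) / \<bar>\<sigma>\<bar>"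
  have pos: "0 < \<kappa>" "0 < \<epsilon>" "0 < L" "0 < \<zeta>" "0 < \<xi>"
    using e \<eta> \<sigma> by (simp_all add: \<kappa>_def \<epsilon>_def L_def \<zeta>_def \<xi>_def)
  have strip: "UNIV \<times> {t0..2 * t0} \<subseteq> UNIV \<times> {0..}" "UNIV \<times> {t0..2 * t0} \<subseteq> UNIV \<times> {0<..}"
    using t0 by auto
  obtain K :: nat where K: "prob (path_exceeds t0 (2 * t0) (real K)) < \<eta> / 8"
    using order_tendstoD(2)[OF prob_path_exceeds_tendsto_0[of t0 "2 * t0"], of "\<eta> / 8"] t0 \<eta>
    unfolding eventually_sequentially by force
  obtain CD where CD: "0 < CD" "\<And>x s. \<bar>x\<bar> \<le> real K \<Longrightarrow> s \<in> {t0..2 * t0} \<Longrightarrow> \<bar>D x s\<bar> \<le> CD"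
    using continuous_on_strip_bounded[OF continuous_on_subset[OF D_cont strip(1)]] by blast
  obtain CG where CG: "0 < CG" "\<And>x s. \<bar>x\<bar> \<le> real K \<Longrightarrow> s \<in> {t0..2 * t0} \<Longrightarrow> \<bar>Gt x s\<bar> \<le> CG"
    using continuous_on_strip_bounded[OF continuous_on_subset[OF Gt_cont strip(2)]] by blast
  obtain d1 where d1: "0 < d1" "\<And>x x' s s'. \<bar>x\<bar> \<le> real K \<Longrightarrow> \<bar>x'\<bar> \<le> real K \<Longrightarrow>
      s \<in> {t0..2 * t0} \<Longrightarrow> s' \<in> {t0..2 * t0} \<Longrightarrow> \<bar>x - x'\<bar> < d1 \<Longrightarrow> \<bar>s - s'\<bar> < d1 \<Longrightarrow>
      \<bar>Gb x s - Gb x' s'\<bar> < \<zeta>"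
    using continuous_on_strip_uniformly[OF continuous_on_subset[OF Gb_cont strip(2)] pos(4)] by blast
  obtain d2 where d2: "0 < d2" "\<And>x x' s s'. \<bar>x\<bar> \<le> real K \<Longrightarrow> \<bar>x'\<bar> \<le> real K \<Longrightarrow>
      s \<in> {t0..2 * t0} \<Longrightarrow> s' \<in> {t0..2 * t0} \<Longrightarrow> \<bar>x - x'\<bar> < d2 \<Longrightarrow> \<bar>s - s'\<bar> < d2 \<Longrightarrow>
      \<bar>G x s - G x' s'\<bar> < \<xi>"
    using continuous_on_strip_uniformly[OF continuous_on_subset[OF G_cont strip(1)] pos(5)] by blast
  obtain h where h: "0 < h" "prob (path_oscillates t0 h (d2 / 2)) < \<eta> / 8"
    using prob_path_oscillates_small[of t0 "d2 / 2" "\<eta> / 8"] t0 d2(1) \<eta> by auto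
  define \<tau>0 where "\<tau>0 = Min {t0, h, d2 / 2, (\<epsilon> / CD)\<^sup>2, (\<epsilon> / (2 * CG))\<^sup>2, (d1 / L)\<^sup>2}"
  have "0 < \<tau>0" using t0 h(1) d2(1) pos CD(1) CG(1) d1(1) by (simp add: \<tau>0_def)
  then obtain m :: nat where m: "0 < m" "t0 / real m \<le> \<tau>0"
    using exists_grid_step t0 by blast
  define \<tau> t1 where "\<tau> = t0 / real m" and "t1 = t0 + \<tau>"
  have \<tau>: "0 < \<tau>" "\<tau> \<le> t0" "\<tau> \<le> h" "\<tau> \<le> d2 / 2" "\<tau> \<le> (\<epsilon> / CD)\<^sup>2" "\<tau> \<le> (\<epsilon> / (2 * CG))\<^sup>2" "\<tau> \<le> (d1 / L)\<^sup>2"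
    using m t0 unfolding \<tau>_def \<tau>0_def by auto
  have sqrt_\<tau>: "CD * \<tau> \<le> \<epsilon> * sqrt \<tau>" "2 * CG * \<tau> \<le> \<epsilon> * sqrt \<tau>" "L * sqrt \<tau> \<le> d1"
    using mult_sqrt_le_if_le_square[OF \<tau>(5) CD(1)] mult_sqrt_le_if_le_square[OF \<tau>(6)]
      mult_sqrt_le_if_le_square[OF \<tau>(7) pos(3)] \<tau>(1) CG(1) pos(2) d1(1) by auto
  define c where "c = \<epsilon> * sqrt \<tau> / \<bar>\<sigma>\<bar>"
  have c: "0 < c" using pos \<tau>(1) \<sigma> by (simp add: c_def)
  obtain n where n: "0 < n" and riemann: "prob {\<omega> \<in> space M. c < \<bar>J t1 \<omega> - J t0 \<omega> -
      (\<Sum>k = m * n..<(m + 1) * n. G (B (real k * (t0 / real (m * n))) \<omega>) (real k * (t0 / real (m * n)))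
         * grid_incr (t0 / real (m * n)) k \<omega>)\<bar>} < \<eta> / 8"
    using ito_integral_increment_approx[OF ito_integral G_B_measurable t0 m(1) c, of "\<eta> / 8"] \<eta>
    by (auto simp: t1_def \<tau>_def)
  define \<delta> where "\<delta> = t0 / real (m * n)"
  note grid = grid_points[OF m(1) n less_imp_le[OF t0], folded \<delta>_def \<tau>_def t1_def]
  have \<delta>: "0 < \<delta>" using t0 m(1) n by (simp add: \<delta>_def)
  define S where "S \<omega> = (\<Sum>k = m * n..<(m + 1) * n. G (B (real k * \<delta>) \<omega>) (real k * \<delta>) * grid_incr \<delta> k \<omega>)"
    for \<omega>
  define g where "g j \<omega> = G (\<Sum>i<j. grid_incr \<delta> i \<omega>) (real j * \<delta>) - G (\<Sum>i<m * n. grid_incr \<delta> i \<omega>) t0"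
    for j \<omega>
  define stopped where "stopped \<omega> = (\<Sum>j = m * n..<(m + 1) * n.
      g j \<omega> * (\<Prod>i = m * n..j. indicator {-\<xi>..\<xi>} (g i \<omega>)) * grid_incr \<delta> j \<omega>)" for \<omega>
  have g_fun: "borel_fun_of (grid_incr \<delta>) {..<j} (g j)" if "m * n \<le> j" for j
  proof -
    have "borel_fun_of (grid_incr \<delta>) {..<j} (\<lambda>\<omega>. \<Sum>i<k. grid_incr \<delta> i \<omega>)" if "k \<le> j" for k
      using that by (intro borel_fun_of_sum borel_fun_of_var) auto
    then show ?thesis unfolding g_def[abs_def] using that t0 \<delta>
      by (intro borel_fun_of_diff borel_fun_of_compose[OF _ G_measurable]) auto
  qed
  have stopped_meas: "stopped \<in> borel_measurable M"
    and "prob {\<omega> \<in> space M. c \<le> \<bar>stopped \<omega>\<bar>} \<le> \<xi>\<^sup>2 * \<delta> * real ((m + 1) * n - m * n) / c\<^sup>2"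
    using prob_stopped_transform_ge[where ?k0.0="m * n" and ?k1.0="(m + 1) * n",
        OF \<delta> c less_imp_le[OF pos(5)] g_fun]
    unfolding stopped_def[abs_def] g_def[abs_def] by auto
  moreover have "\<delta> = \<tau> / real n" using grid(3) n by (simp add: field_simps)
  then have "\<xi>\<^sup>2 * \<delta> * real ((m + 1) * n - m * n) / c\<^sup>2 = \<eta> / 8"
    using \<tau>(1) pos(2) \<sigma> \<eta> n by (simp add: \<xi>_def c_def power_divide power_mult_distrib field_simps)
  ultimately have stopped_prob: "prob {\<omega> \<in> space M. c \<le> \<bar>stopped \<omega>\<bar>} \<le> \<eta> / 8" by linarith
  have t1: "t0 < t1" "t1 \<le> 2 * t0" "t1 \<le> t0 + h" using \<tau> by (auto simp: t1_def)
  define \<Delta> where "\<Delta> \<omega> = B t1 \<omega> - B t0 \<omega>" for \<omega>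
  have [measurable]: "B t0 \<in> borel_measurable M" "B t1 \<in> borel_measurable M" "J t0 \<in> borel_measurable M"
    "J t1 \<in> borel_measurable M" using t0 t1 by auto
  have "S \<in> borel_measurable M"
    unfolding S_def[abs_def] using \<delta>
    by (intro borel_measurable_sum borel_measurable_times G_B_measurable grid_incr_facts(2)) auto
  (* Off these six events the defect times \<Delta> is below 4 \<epsilon> sqrt \<tau> = e \<kappa> sqrt \<tau> by
     diffusion_defect_pathwise, while |\<Delta>| exceeds \<kappa> sqrt \<tau>. *)
  define bad where "bad = [{\<omega> \<in> space M. \<bar>\<Delta> \<omega>\<bar> \<le> \<kappa> * sqrt \<tau>},
    {\<omega> \<in> space M. c < \<bar>J t1 \<omega> - J t0 \<omega> - S \<omega>\<bar>}, {\<omega> \<in> space M. c \<le> \<bar>stopped \<omega>\<bar>},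
    {\<omega> \<in> space M. L * sqrt \<tau> \<le> \<bar>\<Delta> \<omega>\<bar>}, path_exceeds t0 (2 * t0) (real K), path_oscillates t0 h (d2 / 2)]"
  have bad_sets: "set bad \<subseteq> events"
    unfolding bad_def \<Delta>_def using t0 stopped_meas \<open>S \<in> borel_measurable M\<close> by auto
  have "prob {\<omega> \<in> space M. \<bar>\<Delta> \<omega>\<bar> \<le> \<kappa> * sqrt \<tau>} \<le> \<kappa> * sqrt \<tau> / sqrt (t1 - t0)"
    using prob_increment_small_le[of t0 t1 "\<kappa> * sqrt \<tau>"] t0 t1 pos(1) \<tau>(1) by (simp add: \<Delta>_def)
  moreover have "prob {\<omega> \<in> space M. L * sqrt \<tau> \<le> \<bar>\<Delta> \<omega>\<bar>} \<le> (t1 - t0) / (L * sqrt \<tau>)\<^sup>2"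
    using prob_increment_large_le[of t0 t1 "L * sqrt \<tau>"] t0 t1 pos(3) \<tau>(1) by (simp add: \<Delta>_def)
  moreover have "\<kappa> * sqrt \<tau> / sqrt (t1 - t0) = \<eta> / 8" "(t1 - t0) / (L * sqrt \<tau>)\<^sup>2 = \<eta> / 8"
    using \<tau>(1) \<eta> by (simp_all add: t1_def \<kappa>_def L_def power_mult_distrib)
  ultimately have bad_small: "sum_list (map prob bad) \<le> 6 * (\<eta> / 8)"
    using riemann[folded \<delta>_def] stopped_prob K h(2) by (simp add: bad_def S_def)
  have "AE \<omega> in M. \<omega> \<in> {\<omega> \<in> space M. e < \<bar>Gb (B t0 \<omega>) t0 - \<sigma> * G (B t0 \<omega>) t0\<bar>} \<longrightarrow> \<omega> \<in> \<Union>(set bad)"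
    using AE_increment_equation
  proof eventually_elim
    case (elim \<omega>)
    show ?case
    proof (rule impI, rule ccontr)
      assume "\<omega> \<in> {\<omega> \<in> space M. e < \<bar>Gb (B t0 \<omega>) t0 - \<sigma> * G (B t0 \<omega>) t0\<bar>}" "\<omega> \<notin> \<Union>(set bad)"
      then have \<omega>: "\<omega> \<in> space M" and defect: "e < \<bar>Gb (B t0 \<omega>) t0 - \<sigma> * G (B t0 \<omega>) t0\<bar>"
        and \<Delta>_bounds: "\<kappa> * sqrt \<tau> < \<bar>\<Delta> \<omega>\<bar>" "\<bar>\<Delta> \<omega>\<bar> < L * sqrt \<tau>"
        and riemann_small: "\<bar>J t1 \<omega> - J t0 \<omega> - S \<omega>\<bar> \<le> c" and stopped_small: "\<bar>stopped \<omega>\<bar> < c"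
        and bounded: "\<omega> \<notin> path_exceeds t0 (2 * t0) (real K)"
        and calm: "\<omega> \<notin> path_oscillates t0 h (d2 / 2)"
        by (auto simp: bad_def not_le not_less)
      have path: "B 0 \<omega> = 0" "continuous_on {0..} (\<lambda>t. B t \<omega>)"
        and incr: "G (B t1 \<omega>) t1 - G (B t0 \<omega>) t0
          = integral {t0..t1} (\<lambda>s. D (B s \<omega>) s) + \<sigma> * (J t1 \<omega> - J t0 \<omega>)"
        using elim t0 t1 by auto
      have hK: "\<bar>B s \<omega>\<bar> \<le> real K" if "s \<in> {t0..2 * t0}" for s
        using abs_B_le_if_not_path_exceeds[OF \<omega> bounded path(2)] t0 that by auto
      have hO: "\<bar>B s \<omega> - B t0 \<omega>\<bar> \<le> d2 / 2" if "s \<in> {t0..t1}" for s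
        using abs_B_diff_le_if_not_path_oscillates[OF \<omega> calm path(2)] t0 h(1) t1 that by auto
      have "\<bar>Gb (B t0 \<omega>) t0 - \<sigma> * G (B t0 \<omega>) t0\<bar> * \<bar>\<Delta> \<omega>\<bar>
          \<le> CD * (t1 - t0) + CG * (t1 - t0) + \<zeta> * \<bar>\<Delta> \<omega>\<bar>
            + \<bar>\<sigma>\<bar> * \<bar>J t1 \<omega> - J t0 \<omega> - S \<omega>\<bar> + \<bar>\<sigma>\<bar> * \<bar>stopped \<omega>\<bar>"
        unfolding \<Delta>_def S_def stopped_def g_def
      proof (rule diffusion_defect_pathwise[OF path incr \<delta> _ grid(1,2) t0])
        show "m * n \<le> (m + 1) * n" by simp
        show "\<bar>D (B s \<omega>) s\<bar> \<le> CD" if "s \<in> {t0..t1}" for s using CD(2) hK that t1 by auto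
        show "\<bar>Gt (B t1 \<omega>) s\<bar> \<le> CG" if "s \<in> {t0..t1}" for s using CG(2) hK that t1 by auto
        show "\<bar>Gb z t0 - Gb (B t0 \<omega>) t0\<bar> \<le> \<zeta>"
          if "min (B t0 \<omega>) (B t1 \<omega>) \<le> z" "z \<le> max (B t0 \<omega>) (B t1 \<omega>)" for z
        proof -
          have K01: "\<bar>B t0 \<omega>\<bar> \<le> real K" "\<bar>B t1 \<omega>\<bar> \<le> real K" using hK t0 t1 by auto
          then have "\<bar>z\<bar> \<le> real K" "\<bar>z - B t0 \<omega>\<bar> \<le> \<bar>\<Delta> \<omega>\<bar>" using that by (auto simp: \<Delta>_def abs_le_iff)
          then show ?thesis using d1(2)[of z "B t0 \<omega>" t0 t0] K01 \<Delta>_bounds(2) sqrt_\<tau>(3) t0 d1(1) by auto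
        qed
        show "\<bar>G (B s \<omega>) s - G (B t0 \<omega>) t0\<bar> \<le> \<xi>" if s: "s \<in> {t0..t1}" for s
        proof -
          have "\<bar>B s \<omega> - B t0 \<omega>\<bar> < d2" "\<bar>s - t0\<bar> < d2"
            using hO[OF s] s \<tau>(4) d2(1) by (auto simp: t1_def)
          moreover have "\<bar>B s \<omega>\<bar> \<le> real K" "\<bar>B t0 \<omega>\<bar> \<le> real K" "s \<in> {t0..2 * t0}"
            using hK s t0 t1 by auto
          ultimately show ?thesis using d2(2)[of "B s \<omega>" "B t0 \<omega>" s t0] t0 by auto
        qed
      qed
      also have "\<dots> < 4 * (\<epsilon> * sqrt \<tau>)"
      proof -
        have "\<zeta> * \<bar>\<Delta> \<omega>\<bar> < \<epsilon> * sqrt \<tau> / 2"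
          using mult_strict_left_mono[OF \<Delta>_bounds(2) pos(4)] pos(3) by (simp add: \<zeta>_def)
        moreover have "\<bar>\<sigma>\<bar> * \<bar>J t1 \<omega> - J t0 \<omega> - S \<omega>\<bar> \<le> \<epsilon> * sqrt \<tau>"
          using mult_left_mono[OF riemann_small, of "\<bar>\<sigma>\<bar>"] \<sigma> by (simp add: c_def)
        moreover have "\<bar>\<sigma>\<bar> * \<bar>stopped \<omega>\<bar> < \<epsilon> * sqrt \<tau>"
          using mult_strict_left_mono[OF stopped_small, of "\<bar>\<sigma>\<bar>"] \<sigma> by (simp add: c_def)
        ultimately show ?thesis using sqrt_\<tau>(1,2) by (simp add: t1_def)
      qed
      also have "4 * (\<epsilon> * sqrt \<tau>) = e * (\<kappa> * sqrt \<tau>)" by (simp add: \<epsilon>_def)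
      also have "\<dots> \<le> \<bar>Gb (B t0 \<omega>) t0 - \<sigma> * G (B t0 \<omega>) t0\<bar> * \<bar>\<Delta> \<omega>\<bar>"
        using defect \<Delta>_bounds(1) e pos(1) \<tau>(1) by (intro mult_mono) auto
      finally show False by simp
    qed
  qed
  then have "prob {\<omega> \<in> space M. e < \<bar>Gb (B t0 \<omega>) t0 - \<sigma> * G (B t0 \<omega>) t0\<bar>} \<le> prob (\<Union>(set bad))"
    using bad_sets by (intro finite_measure_mono_AE) auto
  also have "\<dots> \<le> sum_list (map prob bad)" by (rule prob_Union_list_le[OF bad_sets])
  finally show ?thesis using bad_small \<eta> by simp
qed

lemma diffusion_coefficient_eq:
  assumes "0 < t0" "\<sigma> \<noteq> 0"
  shows "Gb b t0 = \<sigma> * G b t0"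
proof -
  have cont: "continuous_on UNIV (\<lambda>b. Gb b t0 - \<sigma> * G b t0)"
    using continuous_on_slice[OF Gb_cont, of t0] continuous_on_slice[OF G_cont, of t0] assms(1)
    by (auto intro!: continuous_intros)
  have "(\<lambda>\<omega>. Gb (B t0 \<omega>) t0 - \<sigma> * G (B t0 \<omega>) t0) \<in> borel_measurable M"
    using measurable_compose[OF B_measurable borel_measurable_continuous_onI[OF cont]] assms(1) by simp
  then have "AE \<omega> in M. Gb (B t0 \<omega>) t0 - \<sigma> * G (B t0 \<omega>) t0 = 0"
    by (rule AE_eq_0_if_prob_abs_gt_le) (rule prob_diffusion_defect_gt_le[OF assms])
  then show ?thesis using continuous_eq_0_if_AE_eq_0[OF cont assms(1)] by simp
qed

end

section \<open>Identification of the drift\<close>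

context ito_equation
begin

lemma drift_defect_pathwise:
  fixes k0 k1 :: nat and \<phi> :: "real \<Rightarrow> real" and \<omega> :: 'a
  assumes G_exp: "\<And>b s. t0 \<le> s \<Longrightarrow> G b s = \<phi> s * exp (\<sigma> * b)"
    and incr_eq: "G (B t1 \<omega>) t1 - G (B t0 \<omega>) t0
      = integral {t0..t1} (\<lambda>s. D (B s \<omega>) s) + \<sigma> * (J t1 \<omega> - J t0 \<omega>)"
    and grid: "0 < \<delta>" "k0 \<le> k1" "real k0 * \<delta> = t0" "real k1 * \<delta> = t1" "t0 < t1"
    and D_cont_path: "continuous_on {t0..t1} (\<lambda>s. D (B s \<omega>) s)"
    and D_close: "\<And>s. s \<in> {t0..t1} \<Longrightarrow> \<bar>D (B s \<omega>) s - D (B t0 \<omega>) t0\<bar> \<le> \<zeta>"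
  defines "W \<equiv> \<lambda>\<omega>. (\<phi> t1 * exp (\<sigma> * (\<Sum>i = k0..<k1. grid_incr \<delta> i \<omega>)) - \<phi> t0
      - \<sigma> * (\<Sum>k = k0..<k1. \<phi> (real k * \<delta>) * exp (\<sigma> * (\<Sum>i = k0..<k. grid_incr \<delta> i \<omega>)) * grid_incr \<delta> k \<omega>))
      / (t1 - t0)"
  shows "exp (\<sigma> * B t0 \<omega>) * (t1 - t0) * \<bar>W \<omega> - D (B t0 \<omega>) t0 / exp (\<sigma> * B t0 \<omega>)\<bar>
    \<le> \<zeta> * (t1 - t0) + \<bar>\<sigma>\<bar> * \<bar>J t1 \<omega> - J t0 \<omega>
       - (\<Sum>k = k0..<k1. G (B (real k * \<delta>) \<omega>) (real k * \<delta>) * grid_incr \<delta> k \<omega>)\<bar>"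
proof -
  define E0 \<tau> where "E0 = exp (\<sigma> * B t0 \<omega>)" and "\<tau> = t1 - t0"
  define S where "S = (\<Sum>k = k0..<k1. G (B (real k * \<delta>) \<omega>) (real k * \<delta>) * grid_incr \<delta> k \<omega>)"
  have \<tau>: "0 < \<tau>" using grid(5) by (simp add: \<tau>_def)
  have grid_in: "t0 \<le> real k * \<delta>" if "k0 \<le> k" for k
    using that grid(1,3) by (auto intro: mult_right_mono)
  have incr_sum: "(\<Sum>i = k0..<k. grid_incr \<delta> i \<omega>) = B (real k * \<delta>) \<omega> - B t0 \<omega>" if "k0 \<le> k" for k
    using sum_grid_incr[OF that] grid(3) by simp
  have shift: "E0 * exp (\<sigma> * (x - B t0 \<omega>)) = exp (\<sigma> * x)" for x
    by (simp add: E0_def mult_exp_exp algebra_simps)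
  have "(\<Sum>k = k0..<k1. E0 * (\<phi> (real k * \<delta>) * exp (\<sigma> * (\<Sum>i = k0..<k. grid_incr \<delta> i \<omega>)) * grid_incr \<delta> k \<omega>))
      = S"
    unfolding S_def
  proof (rule sum.cong[OF refl])
    fix k assume "k \<in> {k0..<k1}"
    then have "E0 * exp (\<sigma> * (\<Sum>i = k0..<k. grid_incr \<delta> i \<omega>)) = exp (\<sigma> * B (real k * \<delta>) \<omega>)"
      "G (B (real k * \<delta>) \<omega>) (real k * \<delta>) = \<phi> (real k * \<delta>) * exp (\<sigma> * B (real k * \<delta>) \<omega>)"
      using incr_sum shift G_exp grid_in by auto
    then show "E0 * (\<phi> (real k * \<delta>) * exp (\<sigma> * (\<Sum>i = k0..<k. grid_incr \<delta> i \<omega>)) * grid_incr \<delta> k \<omega>)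
        = G (B (real k * \<delta>) \<omega>) (real k * \<delta>) * grid_incr \<delta> k \<omega>"
      by (metis mult.assoc mult.left_commute)
  qed
  then have "E0 * (\<Sum>k = k0..<k1. \<phi> (real k * \<delta>) * exp (\<sigma> * (\<Sum>i = k0..<k. grid_incr \<delta> i \<omega>)) * grid_incr \<delta> k \<omega>)
      = S"
    by (simp only: sum_distrib_left)
  moreover have "E0 * (\<phi> t1 * exp (\<sigma> * (\<Sum>i = k0..<k1. grid_incr \<delta> i \<omega>))) = G (B t1 \<omega>) t1"
    using incr_sum[OF grid(2)] grid(4,5) G_exp[of t1] shift[of "B t1 \<omega>"] by (simp add: ac_simps)
  moreover have "E0 * \<phi> t0 = G (B t0 \<omega>) t0" using G_exp[of t0] by (simp add: E0_def)
  moreover have "E0 * \<tau> * W \<omega> = E0 * (\<phi> t1 * exp (\<sigma> * (\<Sum>i = k0..<k1. grid_incr \<delta> i \<omega>))) - E0 * \<phi> t0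
      - \<sigma> * (E0 * (\<Sum>k = k0..<k1. \<phi> (real k * \<delta>) * exp (\<sigma> * (\<Sum>i = k0..<k. grid_incr \<delta> i \<omega>))
        * grid_incr \<delta> k \<omega>))"
    using \<tau> unfolding W_def \<tau>_def by (simp add: field_simps)
  ultimately have W_eq: "E0 * \<tau> * W \<omega> = G (B t1 \<omega>) t1 - G (B t0 \<omega>) t0 - \<sigma> * S" by simp
  have E0: "0 < E0" by (simp add: E0_def)
  have drift: "\<bar>integral {t0..t1} (\<lambda>s. D (B s \<omega>) s) - \<tau> * D (B t0 \<omega>) t0\<bar> \<le> \<zeta> * \<tau>"
    unfolding \<tau>_def by (rule integral_mean_dev_le[OF D_cont_path]) (use grid(5) D_close in auto)
  have "E0 * \<tau> * \<bar>W \<omega> - D (B t0 \<omega>) t0 / E0\<bar> = \<bar>E0 * \<tau> * (W \<omega> - D (B t0 \<omega>) t0 / E0)\<bar>"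
    using E0 \<tau> by (simp add: abs_mult)
  also have "\<dots> = \<bar>(integral {t0..t1} (\<lambda>s. D (B s \<omega>) s) - \<tau> * D (B t0 \<omega>) t0) + \<sigma> * (J t1 \<omega> - J t0 \<omega> - S)\<bar>"
    using W_eq incr_eq E0 by (simp add: algebra_simps)
  also have "\<dots> \<le> \<zeta> * \<tau> + \<bar>\<sigma>\<bar> * \<bar>J t1 \<omega> - J t0 \<omega> - S\<bar>"
    using drift abs_triangle_ineq[of "integral {t0..t1} (\<lambda>s. D (B s \<omega>) s) - \<tau> * D (B t0 \<omega>) t0"
        "\<sigma> * (J t1 \<omega> - J t0 \<omega> - S)"] by (simp add: abs_mult)
  finally show ?thesis by (simp add: E0_def \<tau>_def S_def)
qed

lemma drift_approx_by_indep:
  fixes \<phi> :: "real \<Rightarrow> real"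
  assumes t0: "0 < t0" and \<sigma>: "\<sigma> \<noteq> 0" and G_exp: "\<And>b s. t0 \<le> s \<Longrightarrow> G b s = \<phi> s * exp (\<sigma> * b)"
    and \<epsilon>: "0 < \<epsilon>" and \<theta>: "0 < \<theta>"
  obtains W where "W \<in> borel_measurable M" "indep_var borel (\<lambda>\<omega>. B t0 \<omega> - B 0 \<omega>) borel W"
    "prob {\<omega> \<in> space M. \<epsilon> < \<bar>W \<omega> - D (B t0 \<omega> - B 0 \<omega>) t0 / exp (\<sigma> * (B t0 \<omega> - B 0 \<omega>))\<bar>} < \<theta>"
proof -
  obtain K :: nat where K: "prob (path_exceeds t0 (2 * t0) (real K)) < \<theta> / 3"
    using order_tendstoD(2)[OF prob_path_exceeds_tendsto_0[of t0 "2 * t0"], of "\<theta> / 3"] t0 \<theta>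
    unfolding eventually_sequentially by force
  define EK \<zeta> where "EK = exp (\<bar>\<sigma>\<bar> * real K)" and "\<zeta> = \<epsilon> / (2 * EK)"
  have \<zeta>: "0 < \<zeta>" using \<epsilon> by (simp add: \<zeta>_def EK_def)
  have strip: "UNIV \<times> {t0..2 * t0} \<subseteq> UNIV \<times> {0..}" using t0 by auto
  obtain d where d: "0 < d" "\<And>x x' s s'. \<bar>x\<bar> \<le> real K \<Longrightarrow> \<bar>x'\<bar> \<le> real K \<Longrightarrow>
      s \<in> {t0..2 * t0} \<Longrightarrow> s' \<in> {t0..2 * t0} \<Longrightarrow> \<bar>x - x'\<bar> < d \<Longrightarrow> \<bar>s - s'\<bar> < d \<Longrightarrow>
      \<bar>D x s - D x' s'\<bar> < \<zeta>"
    using continuous_on_strip_uniformly[OF continuous_on_subset[OF D_cont strip] \<zeta>] by blast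
  obtain h where h: "0 < h" "prob (path_oscillates t0 h (d / 2)) < \<theta> / 3"
    using prob_path_oscillates_small[of t0 "d / 2" "\<theta> / 3"] t0 d(1) \<theta> by auto
  obtain m :: nat where m: "0 < m" "t0 / real m \<le> min t0 (min h (d / 2))"
    using exists_grid_step[of "min t0 (min h (d / 2))" t0] t0 h(1) d(1) by auto
  define \<tau> t1 where "\<tau> = t0 / real m" and "t1 = t0 + \<tau>"
  have \<tau>: "0 < \<tau>" "\<tau> \<le> t0" "\<tau> \<le> h" "\<tau> \<le> d / 2" using m t0 by (auto simp: \<tau>_def)
  have t1: "t0 < t1" "t1 \<le> 2 * t0" "t1 \<le> t0 + h" using \<tau> by (auto simp: t1_def)
  define c where "c = \<zeta> * \<tau> / \<bar>\<sigma>\<bar>"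
  have c: "0 < c" using \<zeta> \<tau>(1) \<sigma> by (simp add: c_def)
  obtain n where n: "0 < n" and riemann: "prob {\<omega> \<in> space M. c < \<bar>J t1 \<omega> - J t0 \<omega> -
      (\<Sum>k = m * n..<(m + 1) * n. G (B (real k * (t0 / real (m * n))) \<omega>) (real k * (t0 / real (m * n)))
         * grid_incr (t0 / real (m * n)) k \<omega>)\<bar>} < \<theta> / 3"
    using ito_integral_increment_approx[OF ito_integral G_B_measurable t0 m(1) c, of "\<theta> / 3"] \<theta>
    by (auto simp: t1_def \<tau>_def)
  define \<delta> where "\<delta> = t0 / real (m * n)"
  note grid = grid_points[OF m(1) n less_imp_le[OF t0], folded \<delta>_def \<tau>_def t1_def]
  have \<delta>: "0 < \<delta>" using t0 m(1) n by (simp add: \<delta>_def)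
  note incr = grid_incr_facts[OF \<delta>]
  define S where "S \<omega> = (\<Sum>k = m * n..<(m + 1) * n. G (B (real k * \<delta>) \<omega>) (real k * \<delta>) * grid_incr \<delta> k \<omega>)"
    for \<omega>
  (* The Riemann sum for J over [t0, t1], divided by exp (\<sigma> * B t0), is a function W of the
     increments after t0 alone; on good paths W is close to the drift divided by exp (\<sigma> * B t0). *)
  define W where "W \<omega> = (\<phi> t1 * exp (\<sigma> * (\<Sum>i = m * n..<(m + 1) * n. grid_incr \<delta> i \<omega>)) - \<phi> t0
      - \<sigma> * (\<Sum>k = m * n..<(m + 1) * n. \<phi> (real k * \<delta>) * exp (\<sigma> * (\<Sum>i = m * n..<k. grid_incr \<delta> i \<omega>))
          * grid_incr \<delta> k \<omega>)) / (t1 - t0)" for \<omega>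
  define X where "X \<omega> = B t0 \<omega> - B 0 \<omega>" for \<omega>
  have partial_fun: "borel_fun_of (grid_incr \<delta>) I (\<lambda>\<omega>. \<Sum>i\<in>A. grid_incr \<delta> i \<omega>)" if "A \<subseteq> I" "finite A" for A I
    using that by (intro borel_fun_of_sum borel_fun_of_var) auto
  have exp_fun: "borel_fun_of (grid_incr \<delta>) {m * n..<(m + 1) * n}
      (\<lambda>\<omega>. exp (\<sigma> * (\<Sum>i = m * n..<k. grid_incr \<delta> i \<omega>)))"
    if "k \<le> (m + 1) * n" for k
    using borel_fun_of_compose[OF partial_fun, of "{m * n..<k}" _ "\<lambda>x. exp (\<sigma> * x)"] that by auto
  have "borel_fun_of (grid_incr \<delta>) {m * n..<(m + 1) * n} (\<lambda>\<omega>. \<Sum>k = m * n..<(m + 1) * n.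
      \<phi> (real k * \<delta>) * exp (\<sigma> * (\<Sum>i = m * n..<k. grid_incr \<delta> i \<omega>)) * grid_incr \<delta> k \<omega>)"
    by (intro borel_fun_of_sum borel_fun_of_mult borel_fun_of_const exp_fun borel_fun_of_var) auto
  then have W_fun: "borel_fun_of (grid_incr \<delta>) {m * n..<(m + 1) * n} W"
    unfolding W_def[abs_def] using exp_fun[of "(m + 1) * n"]
    by (intro borel_fun_of_compose[where g="\<lambda>x. x / (t1 - t0)"] borel_fun_of_diff borel_fun_of_mult
        borel_fun_of_const) auto
  have "X = (\<lambda>\<omega>. \<Sum>i<m * n. grid_incr \<delta> i \<omega>)"
    using sum_grid_incr[of 0 "m * n" \<delta>] grid(1) by (simp add: X_def fun_eq_iff lessThan_atLeast0)
  then have X_fun: "borel_fun_of (grid_incr \<delta>) {..<m * n} X" using partial_fun[of "{..<m * n}"] by simp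
  have indep: "indep_var borel X borel W"
    by (rule indep_var_borel_fun_of[OF incr(1)[of "(m + 1) * n"] _ _ _ X_fun W_fun]) auto
  have [measurable]: "B t0 \<in> borel_measurable M" "B 0 \<in> borel_measurable M" "J t0 \<in> borel_measurable M"
    "J t1 \<in> borel_measurable M" using t0 t1 by auto
  have W_meas: "W \<in> borel_measurable M" by (rule borel_fun_of_measurable[OF _ W_fun]) (use incr(2) in auto)
  have "S \<in> borel_measurable M"
    unfolding S_def[abs_def] using \<delta>
    by (intro borel_measurable_sum borel_measurable_times G_B_measurable grid_incr_facts(2)) auto
  define V where "V x = D x t0 / exp (\<sigma> * x)" for x
  have "continuous_on UNIV V"
    unfolding V_def[abs_def] using t0 by (intro continuous_intros continuous_on_slice[OF D_cont]) auto
  then have [measurable]: "V \<in> borel_measurable borel" by (rule borel_measurable_continuous_onI)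
  define bad where "bad = [path_exceeds t0 (2 * t0) (real K), path_oscillates t0 h (d / 2),
    {\<omega> \<in> space M. c < \<bar>J t1 \<omega> - J t0 \<omega> - S \<omega>\<bar>}]"
  have bad_sets: "set bad \<subseteq> events" unfolding bad_def using t0 \<open>S \<in> borel_measurable M\<close> by auto
  have "AE \<omega> in M. \<omega> \<in> {\<omega> \<in> space M. \<epsilon> < \<bar>W \<omega> - V (X \<omega>)\<bar>} \<longrightarrow> \<omega> \<in> \<Union>(set bad)"
    using AE_increment_equation
  proof eventually_elim
    case (elim \<omega>)
    show ?case
    proof (rule impI, rule ccontr)
      assume "\<omega> \<in> {\<omega> \<in> space M. \<epsilon> < \<bar>W \<omega> - V (X \<omega>)\<bar>}" "\<omega> \<notin> \<Union>(set bad)"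
      then have \<omega>: "\<omega> \<in> space M" and far: "\<epsilon> < \<bar>W \<omega> - V (X \<omega>)\<bar>"
        and bounded: "\<omega> \<notin> path_exceeds t0 (2 * t0) (real K)"
        and calm: "\<omega> \<notin> path_oscillates t0 h (d / 2)"
        and riemann_small: "\<bar>J t1 \<omega> - J t0 \<omega> - S \<omega>\<bar> \<le> c"
        by (auto simp: bad_def not_less)
      have path: "B 0 \<omega> = 0" "continuous_on {0..} (\<lambda>t. B t \<omega>)"
        and incr: "G (B t1 \<omega>) t1 - G (B t0 \<omega>) t0
          = integral {t0..t1} (\<lambda>s. D (B s \<omega>) s) + \<sigma> * (J t1 \<omega> - J t0 \<omega>)"
        using elim t0 t1 by auto
      have hK: "\<bar>B s \<omega>\<bar> \<le> real K" if "s \<in> {t0..2 * t0}" for s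
        using abs_B_le_if_not_path_exceeds[OF \<omega> bounded path(2)] t0 that by auto
      have hO: "\<bar>B s \<omega> - B t0 \<omega>\<bar> \<le> d / 2" if "s \<in> {t0..t1}" for s
        using abs_B_diff_le_if_not_path_oscillates[OF \<omega> calm path(2)] t0 h(1) t1 that by auto
      have D_close: "\<bar>D (B s \<omega>) s - D (B t0 \<omega>) t0\<bar> \<le> \<zeta>" if s: "s \<in> {t0..t1}" for s
      proof -
        have "\<bar>B s \<omega> - B t0 \<omega>\<bar> < d" "\<bar>s - t0\<bar> < d" using hO[OF s] s \<tau>(4) d(1) by (auto simp: t1_def)
        moreover have "\<bar>B s \<omega>\<bar> \<le> real K" "\<bar>B t0 \<omega>\<bar> \<le> real K" "s \<in> {t0..2 * t0}" using hK s t0 t1 by auto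
        ultimately show ?thesis using d(2)[of "B s \<omega>" "B t0 \<omega>" s t0] t0 by auto
      qed
      have D_path: "continuous_on {t0..t1} (\<lambda>s. D (B s \<omega>) s)"
        by (rule continuous_on_subset[OF continuous_on_along_path[OF D_cont path(2)]]) (use t0 in auto)
      have "exp (\<sigma> * B t0 \<omega>) * (t1 - t0) * \<bar>W \<omega> - V (B t0 \<omega>)\<bar>
          \<le> \<zeta> * (t1 - t0) + \<bar>\<sigma>\<bar> * \<bar>J t1 \<omega> - J t0 \<omega> - S \<omega>\<bar>"
        unfolding W_def S_def V_def
        by (rule drift_defect_pathwise[OF G_exp incr \<delta> _ grid(1,2) t1(1) D_path D_close]) auto
      also have "\<dots> \<le> (2 * \<zeta>) * (t1 - t0)"
        using mult_left_mono[OF riemann_small, of "\<bar>\<sigma>\<bar>"] \<sigma> by (simp add: c_def t1_def mult.commute)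
      finally have "(t1 - t0) * (exp (\<sigma> * B t0 \<omega>) * \<bar>W \<omega> - V (B t0 \<omega>)\<bar>) \<le> (t1 - t0) * (2 * \<zeta>)"
        by (simp only: mult_ac)
      then have "exp (\<sigma> * B t0 \<omega>) * \<bar>W \<omega> - V (B t0 \<omega>)\<bar> \<le> 2 * \<zeta>"
        using t1(1) by (simp add: mult_le_cancel_left_pos)
      moreover have "1 \<le> EK * exp (\<sigma> * B t0 \<omega>)"
      proof -
        have "\<bar>\<sigma> * B t0 \<omega>\<bar> \<le> \<bar>\<sigma>\<bar> * real K" using hK[of t0] t0 by (simp add: abs_mult mult_left_mono)
        then show ?thesis by (simp add: EK_def mult_exp_exp)
      qed
      ultimately have "\<bar>W \<omega> - V (B t0 \<omega>)\<bar> \<le> EK * (exp (\<sigma> * B t0 \<omega>) * \<bar>W \<omega> - V (B t0 \<omega>)\<bar>)"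
        using mult_right_mono[of 1 "EK * exp (\<sigma> * B t0 \<omega>)" "\<bar>W \<omega> - V (B t0 \<omega>)\<bar>"] by (simp add: mult.assoc)
      also have "\<dots> \<le> EK * (2 * \<zeta>)"
        using \<open>exp (\<sigma> * B t0 \<omega>) * \<bar>W \<omega> - V (B t0 \<omega>)\<bar> \<le> 2 * \<zeta>\<close> by (simp add: EK_def)
      also have "\<dots> = \<epsilon>" by (simp add: \<zeta>_def EK_def)
      finally have "\<bar>W \<omega> - V (B t0 \<omega>)\<bar> \<le> \<epsilon>" .
      with far show False by (simp add: X_def path(1))
    qed
  qed
  then have "prob {\<omega> \<in> space M. \<epsilon> < \<bar>W \<omega> - V (X \<omega>)\<bar>} \<le> prob (\<Union>(set bad))"
    using bad_sets by (intro finite_measure_mono_AE) auto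
  also have "\<dots> \<le> sum_list (map prob bad)" by (rule prob_Union_list_le[OF bad_sets])
  also have "\<dots> < \<theta>" using K h(2) riemann[folded \<delta>_def] by (simp add: bad_def S_def)
  finally show ?thesis using that[OF W_meas] indep unfolding X_def[abs_def] V_def by simp
qed

lemma drift_proportional_exp:
  fixes \<phi> :: "real \<Rightarrow> real"
  assumes "0 < t0" "\<sigma> \<noteq> 0" "\<And>b s. t0 \<le> s \<Longrightarrow> G b s = \<phi> s * exp (\<sigma> * b)"
  shows "D x t0 / exp (\<sigma> * x) = D y t0 / exp (\<sigma> * y)"
proof (rule continuous_const_if_approx_by_indep[where X="\<lambda>\<omega>. B t0 \<omega> - B 0 \<omega>" and V="\<lambda>x. D x t0 / exp (\<sigma> * x)"])
  show "continuous_on UNIV (\<lambda>x. D x t0 / exp (\<sigma> * x))"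
    using assms(1) by (intro continuous_intros continuous_on_slice[OF D_cont]) auto
  show "(\<lambda>\<omega>. B t0 \<omega> - B 0 \<omega>) \<in> borel_measurable M"
    using B_measurable[of t0] B_measurable[of 0] assms(1) by auto
  show "0 < prob {\<omega> \<in> space M. u < B t0 \<omega> - B 0 \<omega> \<and> B t0 \<omega> - B 0 \<omega> < v}" if "u < v" for u v
    using prob_increment_between_pos[of 0 t0 u v] assms(1) that by simp
  show "\<exists>W. W \<in> borel_measurable M \<and> indep_var borel (\<lambda>\<omega>. B t0 \<omega> - B 0 \<omega>) borel W \<and>
      prob {\<omega> \<in> space M. \<epsilon> < \<bar>W \<omega> - D (B t0 \<omega> - B 0 \<omega>) t0 / exp (\<sigma> * (B t0 \<omega> - B 0 \<omega>))\<bar>} < \<theta>"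
    if "0 < \<epsilon>" "0 < \<theta>" for \<epsilon> \<theta>
    using drift_approx_by_indep[OF assms that] by blast
qed

end

section \<open>The travelling wave Ansatz\<close>

locale travelling_wave_ansatz =
  fixes M :: "'a measure" and \<beta> :: "real \<Rightarrow> 'a \<Rightarrow> real"
    and \<nu> \<sigma> l c :: real
    and \<Theta> \<Theta>' \<Theta>'' :: "real \<Rightarrow> real"
    and h hb ht :: "real \<Rightarrow> real \<Rightarrow> real"
  assumes sigma: "\<sigma> \<noteq> 0" and l: "l \<noteq> 0"
    and BM: "std_brownian_motion M \<beta>"
    and Theta1: "\<And>y. (\<Theta> has_real_derivative \<Theta>' y) (at y)"
    and Theta2: "\<And>y. (\<Theta>' has_real_derivative \<Theta>'' y) (at y)"
    and Theta2c: "continuous_on UNIV \<Theta>''"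
    and h_b: "\<And>b t. t \<ge> 0 \<Longrightarrow> ((\<lambda>b. h b t) has_real_derivative hb b t) (at b)"
    and h_t: "\<And>b t. t \<ge> 0 \<Longrightarrow> ((\<lambda>t. h b t) has_real_derivative ht b t) (at t within {0..})"
    and h_cont: "continuous_on (UNIV \<times> {0..}) (\<lambda>(b, t). h b t)"
    and hb_cont: "continuous_on (UNIV \<times> {0..}) (\<lambda>(b, t). hb b t)"
    and ht_cont: "continuous_on (UNIV \<times> {0..}) (\<lambda>(b, t). ht b t)"
    and h_nz: "\<And>b t. t \<ge> 0 \<Longrightarrow> h b t \<noteq> 0"
    and solves: "\<forall>x. \<exists>J. is_ito_integral M \<beta>
                    (\<lambda>s \<omega>. \<Theta> (l * x - c * s) * h (\<beta> s \<omega>) s) J \<and>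
        (AE \<omega> in M. \<forall>t\<ge>0.
           \<Theta> (l * x - c * t) * h (\<beta> t \<omega>) t =
             \<Theta> (l * x) * h (\<beta> 0 \<omega>) 0
             + integral {0..t} (\<lambda>s.
                  \<nu> * deriv (deriv (\<lambda>y. \<Theta> (l * y - c * s) * h (\<beta> s \<omega>) s)) x
                  - \<Theta> (l * x - c * s) * h (\<beta> s \<omega>) s
                    * deriv (\<lambda>y. \<Theta> (l * y - c * s) * h (\<beta> s \<omega>) s) x)
             + \<sigma> * J t \<omega>)"
begin

(* wave x b s is Upsilon(x, s) when beta_s = b, wave_b and wave_t are its partial derivatives in b
   and s, and wave_drift x is nu Upsilon_xx - Upsilon Upsilon_x. *)
definition wave :: "real \<Rightarrow> real \<Rightarrow> real \<Rightarrow> real" where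
  "wave x b s = \<Theta> (l * x - c * s) * h b s"

definition wave_drift :: "real \<Rightarrow> real \<Rightarrow> real \<Rightarrow> real" where
  "wave_drift x b s = \<nu> * (\<Theta>'' (l * x - c * s) * l * l * h b s)
     - wave x b s * (\<Theta>' (l * x - c * s) * l * h b s)"

definition wave_b :: "real \<Rightarrow> real \<Rightarrow> real \<Rightarrow> real" where
  "wave_b x b s = \<Theta> (l * x - c * s) * hb b s"

definition wave_t :: "real \<Rightarrow> real \<Rightarrow> real \<Rightarrow> real" where
  "wave_t x b s = \<Theta>' (l * x - c * s) * (- c) * h b s + ht b s * \<Theta> (l * x - c * s)"

lemma deriv_wave:
  "deriv (\<lambda>y. \<Theta> (l * y - c * s) * K) = (\<lambda>y. \<Theta>' (l * y - c * s) * l * K)"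
  "deriv (\<lambda>y. \<Theta>' (l * y - c * s) * l * K) x = \<Theta>'' (l * x - c * s) * l * l * K"
proof -
  have "((\<lambda>y. \<Theta> (l * y - c * s) * K) has_real_derivative \<Theta>' (l * y - c * s) * l * K) (at y)" for y
    by (rule DERIV_cmult_right, rule DERIV_chain2[OF Theta1]) (auto intro!: derivative_eq_intros)
  then show "deriv (\<lambda>y. \<Theta> (l * y - c * s) * K) = (\<lambda>y. \<Theta>' (l * y - c * s) * l * K)"
    by (intro ext DERIV_imp_deriv)
  have "((\<lambda>y. \<Theta>' (l * y - c * s) * l * K) has_real_derivative \<Theta>'' (l * x - c * s) * l * l * K) (at x)"
    by (intro DERIV_cmult_right, rule DERIV_chain2[OF Theta2]) (auto intro!: derivative_eq_intros)
  then show "deriv (\<lambda>y. \<Theta>' (l * y - c * s) * l * K) x = \<Theta>'' (l * x - c * s) * l * l * K"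
    by (rule DERIV_imp_deriv)
qed

lemma wave_ito_equation:
  obtains J where "smooth_ito_equation M \<beta> (wave x) (wave_drift x) \<sigma> J (wave_b x) (wave_t x)"
proof -
  obtain J where J: "is_ito_integral M \<beta> (\<lambda>s \<omega>. \<Theta> (l * x - c * s) * h (\<beta> s \<omega>) s) J"
    and eq: "AE \<omega> in M. \<forall>t\<ge>0. \<Theta> (l * x - c * t) * h (\<beta> t \<omega>) t = \<Theta> (l * x) * h (\<beta> 0 \<omega>) 0
      + integral {0..t} (\<lambda>s. \<nu> * deriv (deriv (\<lambda>y. \<Theta> (l * y - c * s) * h (\<beta> s \<omega>) s)) x
          - \<Theta> (l * x - c * s) * h (\<beta> s \<omega>) s * deriv (\<lambda>y. \<Theta> (l * y - c * s) * h (\<beta> s \<omega>) s) x)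
      + \<sigma> * J t \<omega>"
    using solves by blast
  have "continuous_on S (\<lambda>p. f (l * x - c * snd p))" if "continuous_on UNIV f" for f S
    by (rule continuous_on_compose2[OF that]) (auto intro!: continuous_intros)
  moreover have "continuous_on UNIV \<Theta>" "continuous_on UNIV \<Theta>'"
    using Theta1 Theta2 by (auto intro!: continuous_at_imp_continuous_on DERIV_isCont)
  ultimately have wave_cont: "continuous_on S (\<lambda>p. f (l * x - c * snd p))"
    if "f \<in> {\<Theta>, \<Theta>', \<Theta>''}" for f S
    using that Theta2c by auto
  have h_cont': "continuous_on S (\<lambda>p. g (fst p) (snd p))"
    if "g \<in> {h, hb, ht}" "S \<subseteq> UNIV \<times> {0..}" for g S
    using that h_cont hb_cont ht_cont by (auto simp: case_prod_unfold intro: continuous_on_subset)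
  have h_deriv_t: "((\<lambda>t. h b t) has_real_derivative ht b s) (at s)" if "0 < s" for b s
    using h_t[of s b] that at_within_interior[of s "{0..}"] by simp
  show ?thesis
  proof (rule that, unfold_locales)
    show "std_brownian_motion M \<beta>" by (rule BM)
    show "is_ito_integral M \<beta> (\<lambda>s \<omega>. wave x (\<beta> s \<omega>) s) J" using J by (simp add: wave_def)
    show "AE \<omega> in M. \<forall>t\<ge>0. wave x (\<beta> t \<omega>) t
        = wave x (\<beta> 0 \<omega>) 0 + integral {0..t} (\<lambda>s. wave_drift x (\<beta> s \<omega>) s) + \<sigma> * J t \<omega>"
      using eq by (simp add: wave_def wave_drift_def deriv_wave)
    show "continuous_on (UNIV \<times> {0..}) (\<lambda>(b, s). wave x b s)"
      unfolding wave_def case_prod_unfold by (intro continuous_intros wave_cont h_cont') auto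
    show "continuous_on (UNIV \<times> {0..}) (\<lambda>(b, s). wave_drift x b s)"
      unfolding wave_drift_def wave_def case_prod_unfold
      by (intro continuous_intros wave_cont h_cont') auto
    show "continuous_on (UNIV \<times> {0<..}) (\<lambda>(b, s). wave_b x b s)"
      unfolding wave_b_def case_prod_unfold by (intro continuous_intros wave_cont h_cont') auto
    show "continuous_on (UNIV \<times> {0<..}) (\<lambda>(b, s). wave_t x b s)"
      unfolding wave_t_def case_prod_unfold by (intro continuous_intros wave_cont h_cont') auto
    show "((\<lambda>b. wave x b s) has_real_derivative wave_b x b s) (at b)" if "0 < s" for b s
      unfolding wave_def wave_b_def using h_b that by (intro DERIV_cmult) auto
    show "((\<lambda>s. wave x b s) has_real_derivative wave_t x b s) (at s)" if "0 < s" for b s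
      unfolding wave_def wave_t_def
      by (rule DERIV_mult[OF DERIV_chain2[OF Theta1] h_deriv_t[OF that]])
         (auto intro!: derivative_eq_intros)
  qed
qed

lemma hb_eq_sigma_h:
  assumes "\<Theta> y \<noteq> 0" "0 < t"
  shows "hb b t = \<sigma> * h b t"
proof -
  define x where "x = (y + c * t) / l"
  have lx: "l * x - c * t = y" using l by (simp add: x_def field_simps)
  obtain J where "smooth_ito_equation M \<beta> (wave x) (wave_drift x) \<sigma> J (wave_b x) (wave_t x)"
    by (rule wave_ito_equation)
  from smooth_ito_equation.diffusion_coefficient_eq[OF this assms(2) sigma]
  have "\<Theta> y * hb b t = \<Theta> y * (\<sigma> * h b t)" by (simp add: wave_def wave_b_def lx)
  then show ?thesis using assms(1) by simp
qed

lemma h_eq_exp: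
  assumes "\<Theta> y \<noteq> 0" "0 < t"
  shows "h b t = exp (\<sigma> * b) * h 0 t"
  using h_b[of t] hb_eq_sigma_h[OF assms] assms(2) by (intro exp_if_deriv_eq_mult) auto

lemma Theta_mult_deriv_eq_0:
  assumes "\<Theta> y \<noteq> 0"
  shows "\<Theta> z * \<Theta>' z = 0"
proof -
  define x where "x = (z + c) / l"
  have lx: "l * x - c = z" using l by (simp add: x_def field_simps)
  obtain J where "smooth_ito_equation M \<beta> (wave x) (wave_drift x) \<sigma> J (wave_b x) (wave_t x)"
    by (rule wave_ito_equation)
  then have "ito_equation M \<beta> (wave x) (wave_drift x) \<sigma> J" by (rule smooth_ito_equation.axioms(1))
  moreover have "wave x b s = \<Theta> (l * x - c * s) * h 0 s * exp (\<sigma> * b)" if "1 \<le> s" for b s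
    using h_eq_exp[OF assms, of s b] that by (simp add: wave_def)
  ultimately have const: "wave_drift x b 1 / exp (\<sigma> * b) = wave_drift x b' 1 / exp (\<sigma> * b')" for b b'
    by (rule ito_equation.drift_proportional_exp[OF _ zero_less_one sigma])
  define h0 where "h0 = h 0 1"
  have drift: "wave_drift x b 1 / exp (\<sigma> * b)
      = \<nu> * \<Theta>'' z * l * l * h0 - \<Theta> z * \<Theta>' z * l * h0 * h0 * exp (\<sigma> * b)" for b
    using h_eq_exp[OF assms zero_less_one, of b] by (simp add: wave_drift_def wave_def lx h0_def field_simps)
  have "\<Theta> z * \<Theta>' z * l * h0 * h0 * (exp \<sigma> - 1) = 0"
    using const[of 0 1] unfolding drift by (simp add: algebra_simps)
  moreover have "h0 \<noteq> 0" "exp \<sigma> \<noteq> 1" using h_nz[of 1 0] sigma by (auto simp: h0_def)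
  ultimately show ?thesis using l by simp
qed

lemma Theta_constant: "\<exists>k. \<forall>y. \<Theta> y = k"
proof (cases "\<forall>y. \<Theta> y = 0")
  case False
  then obtain y where "\<Theta> y \<noteq> 0" by blast
  then show ?thesis by (rule constant_if_mult_deriv_eq_0[OF Theta1 Theta_mult_deriv_eq_0])
qed blast

end

theorem mainTheorem2:
  fixes M :: "'a measure" and \<beta> :: "real \<Rightarrow> 'a \<Rightarrow> real"
    and \<nu> \<sigma> l c :: real
    and \<Theta> \<Theta>' \<Theta>'' :: "real \<Rightarrow> real"
    and h hb hbb ht :: "real \<Rightarrow> real \<Rightarrow> real"
  assumes nu: "\<nu> > 0" and sigma: "\<sigma> \<noteq> 0" and l: "l \<noteq> 0"
    and BM: "std_brownian_motion M \<beta>"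
    and Theta1: "\<And>y. (\<Theta> has_real_derivative \<Theta>' y) (at y)"
    and Theta2: "\<And>y. (\<Theta>' has_real_derivative \<Theta>'' y) (at y)"
    and Theta2c: "continuous_on UNIV \<Theta>''"
    and h_b: "\<And>b t. t \<ge> 0 \<Longrightarrow> ((\<lambda>b. h b t) has_real_derivative hb b t) (at b)"
    and h_bb: "\<And>b t. t \<ge> 0 \<Longrightarrow> ((\<lambda>b. hb b t) has_real_derivative hbb b t) (at b)"
    and h_t: "\<And>b t. t \<ge> 0 \<Longrightarrow> ((\<lambda>t. h b t) has_real_derivative ht b t) (at t within {0..})"
    and h_cont: "continuous_on (UNIV \<times> {0..}) (\<lambda>(b, t). h b t)"
    and hb_cont: "continuous_on (UNIV \<times> {0..}) (\<lambda>(b, t). hb b t)"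
    and hbb_cont: "continuous_on (UNIV \<times> {0..}) (\<lambda>(b, t). hbb b t)"
    and ht_cont: "continuous_on (UNIV \<times> {0..}) (\<lambda>(b, t). ht b t)"
    and h_nz: "\<And>b t. t \<ge> 0 \<Longrightarrow> h b t \<noteq> 0"
    and solves: "\<forall>x. \<exists>J. is_ito_integral M \<beta>
                    (\<lambda>s \<omega>. \<Theta> (l * x - c * s) * h (\<beta> s \<omega>) s) J \<and>
        (AE \<omega> in M. \<forall>t\<ge>0.
           \<Theta> (l * x - c * t) * h (\<beta> t \<omega>) t =
             \<Theta> (l * x) * h (\<beta> 0 \<omega>) 0
             + integral {0..t} (\<lambda>s.
                  \<nu> * deriv (deriv (\<lambda>y. \<Theta> (l * y - c * s) * h (\<beta> s \<omega>) s)) x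
                  - \<Theta> (l * x - c * s) * h (\<beta> s \<omega>) s
                    * deriv (\<lambda>y. \<Theta> (l * y - c * s) * h (\<beta> s \<omega>) s) x)
             + \<sigma> * J t \<omega>)"
  shows "\<exists>k. \<forall>y. \<Theta> y = k"
proof -
  interpret travelling_wave_ansatz M \<beta> \<nu> \<sigma> l c \<Theta> \<Theta>' \<Theta>'' h hb ht
    by unfold_locales (fact sigma l BM Theta1 Theta2 Theta2c h_b h_t h_cont hb_cont ht_cont h_nz solves)+
  show ?thesis by (rule Theta_constant)
qed

end
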